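(* Let $x^*\in X$ satisfy $\langle F(x^* ),x-x^*\rangle\ge0$ and $\langle F(x),x-x^*\rangle\ge0$ for all $x\in X$. Let $\{x_t\}$ be generated by the SOE method with constant mini-batch size $m$ and let $\{\theta_t\}$ be nonnegative numbers such that for all $t=1,\dots,k$, $$\theta_{t+1}\gamma_{t+1}\lambda_{t+1}=\gamma_t\theta_t,\quad\theta_{t-1}\ge16L^2\gamma_t^2\lambda_t^2\theta_t,\quad\theta_t\le\theta_{t-1},$$ and $8L^2\gamma_k^2\le1$. Then, with $\tilde\sigma^2=\sigma^2/m$, $$\sum_{t=1}^k\frac{\theta_t}{8}\mathbb{E}\|x_{t+1}-x_t\|^2\le\theta_1V(x_1,x^* )+\sum_{t=1}^k8\theta_t\gamma_t^2\lambda_t^2\tilde\sigma^2+4\theta_k\gamma_k^2\tilde\sigma^2.$$ In particular, if $k\ge2$, $m=k+1$, $\theta_t=1$, $\lambda_t=1$, $\gamma_t=\frac1{4L}$ for all $t$, and $R$ is drawn uniformly from $\{2,3,\dots,k\}$ independently of the iterates and samples, then $$\mathbb{E}[\mathrm{res}(x_{R+1})^2]\le\frac{20\sigma^2}{k+1}+32\big[(L+4LL_\omega)^2+L^2\big]\frac{2V(x_1,x^* )+\sigma^2/L^2}{k-1}.$$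
   Context: Let $X\subseteq\mathbb{R}^n$ be a nonempty closed convex set, with the Euclidean norm $\|\cdot\|$ (so $\|\cdot\|_*=\|\cdot\|$). Let $F:X\to\mathbb{R}^n$ satisfy $\|F(x_1)-F(x_2)\|\le L\|x_1-x_2\|$ on $X$, $L>0$. Let $\omega$ be differentiable on $X$, strongly convex with modulus $1$, with $\|\nabla\omega(x_1)-\nabla\omega(x_2)\|\le L_\omega\|x_1-x_2\|$; let $V(x,y)=\omega(y)-\omega(x)-\langle\nabla\omega(x),y-x\rangle$. Stochastic oracle: for $x\in X$ and random $\xi$ it returns $\tilde F(x,\xi)$ with $\mathbb{E}[\tilde F(x,\xi)]=F(x)$ and $\mathbb{E}\|\tilde F(x,\xi)-F(x)\|^2\le\sigma^2$. SOE method with mini-batch $m$: given $x_0=x_1\in X$ and nonnegative $\{\gamma_t\},\{\lambda_t\}$; at each $t=1,\dots,k+1$ draw $m$ i.i.d. samples $\xi_{t,1},\dots,\xi_{t,m}$ independent of earlier samples and set $\tilde F(x_t)=\frac1m\sum_{i=1}^m\tilde F(x_t,\xi_{t,i})$; with the convention $\tilde F(x_0)=\tilde F(x_1)$, for $t=1,\dots,k$, $x_{t+1}=\operatorname{argmin}_{x\in X}\gamma_t\langle\tilde F(x_t)+\lambda_t(\tilde F(x_t)-\tilde F(x_{t-1})),x\rangle+V(x_t,x)$. With $N_X(\bar x)=\{y:\langle y,x-\bar x\rangle\le0\ \forall x\in X\}$, the residual is $\mathrm{res}(\bar x)=\min_{y\in-N_X(\bar x)}\|y-F(\bar x)\|$.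 *)

theory Defs
  imports "HOL-Analysis.Analysis" "HOL-Probability.Probability"
begin

definition strongly_convex_on :: "'a::real_normed_vector set \<Rightarrow> real \<Rightarrow> ('a \<Rightarrow> real) \<Rightarrow> bool" where
  "strongly_convex_on S mu f \<longleftrightarrow>
     (\<forall>x\<in>S. \<forall>y\<in>S. \<forall>u::real. 0 \<le> u \<and> u \<le> 1 \<longrightarrow>
        f (u *\<^sub>R x + (1 - u) *\<^sub>R y) \<le> u * f x + (1 - u) * f y - mu / 2 * u * (1 - u) * (norm (x - y))\<^sup>2)"

definition bregman :: "('a::real_inner \<Rightarrow> real) \<Rightarrow> ('a \<Rightarrow> 'a) \<Rightarrow> 'a \<Rightarrow> 'a \<Rightarrow> real" where
  "bregman w gw x y = w y - w x - inner (gw x) (y - x)"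

definition normal_cone :: "'a::real_inner set \<Rightarrow> 'a \<Rightarrow> 'a set" where
  "normal_cone X xb = {y. \<forall>x\<in>X. inner y (x - xb) \<le> 0}"

definition residual :: "'a::real_inner set \<Rightarrow> ('a \<Rightarrow> 'a) \<Rightarrow> 'a \<Rightarrow> real" where
  "residual X F xb = (INF y\<in>uminus ` normal_cone X xb. norm (y - F xb))"

definition batch_est :: "('a::real_vector \<Rightarrow> 's \<Rightarrow> 'a) \<Rightarrow> (nat \<Rightarrow> nat \<Rightarrow> 'w \<Rightarrow> 's) \<Rightarrow> nat
    \<Rightarrow> (nat \<Rightarrow> 'w \<Rightarrow> 'a) \<Rightarrow> nat \<Rightarrow> 'w \<Rightarrow> 'a" where
  "batch_est G xi m x t \<omega> = (1 / real m) *\<^sub>R (\<Sum>i<m. G (x t \<omega>) (xi t i \<omega>))"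

text \<open>The iterates x_1, ..., x_{k+1} (as random vectors over the sample space) are generated by
  the SOE method with step sizes gam, extrapolation parameters lam, mini-batch m, starting point x1;
  with the convention F~(x_0) = F~(x_1).\<close>
definition soe_iterates ::
  "'a::real_inner set \<Rightarrow> ('a \<Rightarrow> real) \<Rightarrow> ('a \<Rightarrow> 'a) \<Rightarrow> ('a \<Rightarrow> 's \<Rightarrow> 'a)
   \<Rightarrow> (nat \<Rightarrow> nat \<Rightarrow> 'w \<Rightarrow> 's) \<Rightarrow> nat \<Rightarrow> (nat \<Rightarrow> real) \<Rightarrow> (nat \<Rightarrow> real) \<Rightarrow> 'a \<Rightarrow> nat
   \<Rightarrow> (nat \<Rightarrow> 'w \<Rightarrow> 'a) \<Rightarrow> bool" where
  "soe_iterates X w gw G xi m gam lam x1 k x \<longleftrightarrow>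
     (\<forall>\<omega>. x 1 \<omega> = x1) \<and>
     (\<forall>t\<in>{1..k}. \<forall>\<omega>.
        (let Ft = batch_est G xi m x t \<omega>;
             Fp = batch_est G xi m x (if t = 1 then 1 else t - 1) \<omega>;
             g = Ft + lam t *\<^sub>R (Ft - Fp)
         in x (Suc t) \<omega> \<in> X \<and>
            (\<forall>z\<in>X. gam t * inner g (x (Suc t) \<omega>) + bregman w gw (x t \<omega>) (x (Suc t) \<omega>)
                    \<le> gam t * inner g z + bregman w gw (x t \<omega>) z)))"

text \<open>Independence of two random variables with possibly different codomain types
  (the library's indep_var requires equal codomain types); this is the unfolded form of
  the library lemma prob_space.indep_var_eq.\<close>
definition indep_rv :: "'w measure \<Rightarrow> 'b measure \<Rightarrow> ('w \<Rightarrow> 'b) \<Rightarrow> 'c measure \<Rightarrow> ('w \<Rightarrow> 'c) \<Rightarrow> bool" where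
  "indep_rv M S X T Y \<longleftrightarrow>
     X \<in> measurable M S \<and> Y \<in> measurable M T \<and>
     prob_space.indep_set M
       (sigma_sets (space M) {X -` A \<inter> space M | A. A \<in> sets S})
       (sigma_sets (space M) {Y -` A \<inter> space M | A. A \<in> sets T})"

end

theory Submission
  imports Defs
begin

text \<open>The iterates are deterministic functions of the array of oracle samples, so every
  expectation can be computed on the product space of the samples. Pathwise, the three-point
  inequality of each Bregman proximal step, monotonicity of \<open>F\<close> at \<open>x\<^sup>*\<close> and Young's inequality
  for the extrapolation term give a one-step energy inequality, and the weight conditions make the
  Bregman distances and the extrapolation inner products telescope. Two stochastic terms remain:
  the inner product of the oracle error at \<open>x(t+1)\<close> with \<open>x(t+1) - x\<^sup>*\<close> has mean zero, because
  the batch of iteration \<open>t+1\<close> is independent of \<open>x(t+1)\<close>; and the squared oracle errors have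
  mean at most \<open>\<sigma>\<^sup>2/m\<close>, because distinct samples are uncorrelated.

  For the residual, the optimality condition of step \<open>t\<close> exhibits an element of
  \<open>-N\<^sub>X(x(t+1))\<close> whose distance to \<open>F(x(t+1))\<close> is controlled by the last two step lengths and
  oracle errors; averaging over the independent uniform index \<open>R\<close> and inserting the first bound with
  \<open>\<theta> = \<lambda> = 1\<close>, \<open>\<gamma> = 1/(4L)\<close> gives the second.\<close>

section \<open>Bregman proximal steps\<close>

locale bregman_setup =
  fixes X :: "'a::euclidean_space set" and w :: "'a \<Rightarrow> real" and gw :: "'a \<Rightarrow> 'a"
  assumes X_convex: "convex X" and X_closed: "closed X" and X_ne: "X \<noteq> {}"
    and w_deriv: "\<forall>z\<in>X. (w has_derivative (\<lambda>h. inner (gw z) h)) (at z within X)"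
    and w_sconvex: "strongly_convex_on X 1 w"
begin

lemma segment_in_X:
  assumes "y \<in> X" "z \<in> X" "0 \<le> s" "s \<le> 1"
  shows "z + s *\<^sub>R (y - z) \<in> X"
proof -
  have "z + s *\<^sub>R (y - z) = (1 - s) *\<^sub>R z + s *\<^sub>R y" by (simp add: algebra_simps)
  thus ?thesis using assms X_convex unfolding convex_def by auto
qed

lemma difference_quotient_tendsto:
  assumes y: "y \<in> X" and z: "z \<in> X"
  shows "((\<lambda>s. (w (z + s *\<^sub>R (y - z)) - w z) / s) \<longlongrightarrow> inner (gw z) (y - z)) (at_right 0)"
proof -
  have p: "((\<lambda>s. z + s *\<^sub>R (y - z)) has_derivative (\<lambda>s. s *\<^sub>R (y - z))) (at 0 within {0..1::real})"
    by (auto intro!: derivative_eq_intros)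
  have sub: "(\<lambda>s. z + s *\<^sub>R (y - z)) ` {0..1} \<subseteq> X" using segment_in_X[OF y z] by auto
  have "((\<lambda>s. w (z + s *\<^sub>R (y - z))) has_derivative
          (\<lambda>s. inner (gw (z + 0 *\<^sub>R (y - z))) (s *\<^sub>R (y - z)))) (at 0 within {0..1})"
    by (rule has_derivative_in_compose2[OF _ sub _ p]) (use w_deriv in auto)
  hence "((\<lambda>s. w (z + s *\<^sub>R (y - z))) has_field_derivative inner (gw z) (y - z)) (at 0 within {0..1})"
    unfolding has_field_derivative_def by (rule has_derivative_eq_rhs) (auto simp: fun_eq_iff)
  hence "((\<lambda>s. (w (z + s *\<^sub>R (y - z)) - w (z + 0 *\<^sub>R (y - z))) / (s - 0)) \<longlongrightarrow> inner (gw z) (y - z))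
           (at 0 within {0..1})"
    unfolding has_field_derivative_iff .
  thus ?thesis by (simp add: at_within_Icc_at_right)
qed

lemma bregman_ge_half_sq_dist:
  assumes x: "x \<in> X" and y: "y \<in> X"
  shows "bregman w gw x y \<ge> (norm (y - x))\<^sup>2 / 2"
proof -
  have ev: "\<forall>\<^sub>F s in at_right 0.
      (w (x + s *\<^sub>R (y - x)) - w x) / s \<le> w y - w x - (1 - s) / 2 * (norm (y - x))\<^sup>2"
  proof -
    have "\<forall>\<^sub>F s in at_right (0::real). s \<in> {0<..<1}"
      by (rule eventually_at_right_real) auto
    thus ?thesis
    proof eventually_elim
      case (elim s)
      hence s: "0 < s" "s < 1" by auto
      have "w (s *\<^sub>R y + (1 - s) *\<^sub>R x) \<le> s * w y + (1 - s) * w x - 1 / 2 * s * (1 - s) * (norm (y - x))\<^sup>2"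
        using w_sconvex x y s unfolding strongly_convex_on_def by auto
      moreover have "s *\<^sub>R y + (1 - s) *\<^sub>R x = x + s *\<^sub>R (y - x)" by (simp add: algebra_simps)
      ultimately have "w (x + s *\<^sub>R (y - x)) - w x \<le> s * (w y - w x - (1 - s) / 2 * (norm (y - x))\<^sup>2)"
        by (simp add: algebra_simps)
      thus ?case using s by (simp add: divide_simps mult.commute)
    qed
  qed
  have lim: "((\<lambda>s. w y - w x - (1 - s) / 2 * (norm (y - x))\<^sup>2)
               \<longlongrightarrow> w y - w x - (1 - 0) / 2 * (norm (y - x))\<^sup>2) (at_right 0)"
    by (intro tendsto_intros) auto
  have "inner (gw x) (y - x) \<le> w y - w x - (1 - 0) / 2 * (norm (y - x))\<^sup>2"
    by (rule tendsto_le[OF _ lim difference_quotient_tendsto[OF y x] ev]) simp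
  thus ?thesis unfolding bregman_def by simp
qed

lemma bregman_nonneg: "x \<in> X \<Longrightarrow> y \<in> X \<Longrightarrow> bregman w gw x y \<ge> 0"
  using bregman_ge_half_sq_dist[of x y] zero_le_power2[of "norm (y - x)"] by linarith

lemma gw_strongly_monotone:
  assumes z: "z \<in> X" and z': "z' \<in> X"
  shows "inner (gw z' - gw z) (z' - z) \<ge> (norm (z' - z))\<^sup>2"
proof -
  have "bregman w gw z z' + bregman w gw z' z = inner (gw z' - gw z) (z' - z)"
    unfolding bregman_def by (simp add: inner_simps algebra_simps)
  moreover have "(norm (z' - z))\<^sup>2 / 2 \<le> bregman w gw z z'" using bregman_ge_half_sq_dist[OF z z'] .
  moreover have "(norm (z' - z))\<^sup>2 / 2 \<le> bregman w gw z' z"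
    using bregman_ge_half_sq_dist[OF z' z] by (simp add: norm_minus_commute)
  ultimately show ?thesis by linarith
qed

lemma bregman_three_point_eq:
  "bregman w gw a u - bregman w gw z u - bregman w gw a z = inner (gw z - gw a) (u - z)"
  unfolding bregman_def by (simp add: inner_simps algebra_simps)

definition is_prox_point :: "'a \<Rightarrow> 'a \<Rightarrow> 'a \<Rightarrow> bool" where
  "is_prox_point a v z \<longleftrightarrow>
     z \<in> X \<and> (\<forall>u\<in>X. inner v z + bregman w gw a z \<le> inner v u + bregman w gw a u)"

lemma prox_point_variational_ineq:
  assumes a: "a \<in> X" and prox: "is_prox_point a v z" and u: "u \<in> X"
  shows "inner (v + gw z - gw a) (u - z) \<ge> 0"
proof -
  have z: "z \<in> X" using prox unfolding is_prox_point_def by blast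
  have ev: "\<forall>\<^sub>F s in at_right 0.
      0 \<le> inner v (u - z) + (w (z + s *\<^sub>R (u - z)) - w z) / s - inner (gw a) (u - z)"
  proof -
    have "\<forall>\<^sub>F s in at_right (0::real). s \<in> {0<..<1}"
      by (rule eventually_at_right_real) auto
    thus ?thesis
    proof eventually_elim
      case (elim s)
      hence s: "0 < s" "s < 1" by auto
      have "z + s *\<^sub>R (u - z) \<in> X" using segment_in_X[OF u z] s by auto
      hence "inner v z + bregman w gw a z
               \<le> inner v (z + s *\<^sub>R (u - z)) + bregman w gw a (z + s *\<^sub>R (u - z))"
        using prox unfolding is_prox_point_def by blast
      hence "0 \<le> (s * inner v (u - z) + (w (z + s *\<^sub>R (u - z)) - w z) - s * inner (gw a) (u - z)) / s"
        unfolding bregman_def using s by (simp add: inner_simps algebra_simps)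
      thus ?case using s by (simp add: diff_divide_distrib add_divide_distrib)
    qed
  qed
  have lim: "((\<lambda>s. inner v (u - z) + (w (z + s *\<^sub>R (u - z)) - w z) / s - inner (gw a) (u - z))
      \<longlongrightarrow> inner v (u - z) + inner (gw z) (u - z) - inner (gw a) (u - z)) (at_right 0)"
    by (intro tendsto_intros difference_quotient_tendsto[OF u z])
  have "0 \<le> inner v (u - z) + inner (gw z) (u - z) - inner (gw a) (u - z)"
    by (rule tendsto_le[OF _ lim tendsto_const ev]) simp
  thus ?thesis by (simp add: inner_simps)
qed

lemma prox_point_three_point:
  assumes a: "a \<in> X" and prox: "is_prox_point a v z" and u: "u \<in> X"
  shows "inner v (z - u) + bregman w gw a z \<le> bregman w gw a u - bregman w gw z u"
proof -
  have "inner (v + gw z - gw a) (u - z) \<ge> 0" by (rule prox_point_variational_ineq[OF a prox u])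
  hence "inner v (z - u) \<le> inner (gw z - gw a) (u - z)" by (simp add: inner_simps algebra_simps)
  thus ?thesis using bregman_three_point_eq[of a u z] by linarith
qed

lemma prox_point_dist_le:
  assumes a: "a \<in> X" and a': "a' \<in> X"
    and prox: "is_prox_point a v z" and prox': "is_prox_point a' v' z'"
  shows "norm (z - z') \<le> norm (v - v') + norm (gw a - gw a')"
proof -
  have z: "z \<in> X" and z': "z' \<in> X" using prox prox' unfolding is_prox_point_def by auto
  have "inner (v + gw z - gw a) (z' - z) \<ge> 0" "inner (v' + gw z' - gw a') (z - z') \<ge> 0"
    using prox_point_variational_ineq[OF a prox z'] prox_point_variational_ineq[OF a' prox' z] .
  hence "inner (gw z' - gw z) (z' - z) \<le> inner ((v - v') - (gw a - gw a')) (z' - z)"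
    by (simp add: inner_simps algebra_simps)
  also have "\<dots> \<le> norm ((v - v') - (gw a - gw a')) * norm (z' - z)"
    by (rule norm_cauchy_schwarz)
  also have "\<dots> \<le> (norm (v - v') + norm (gw a - gw a')) * norm (z' - z)"
    by (intro mult_right_mono norm_triangle_ineq4) simp
  finally have "(norm (z' - z))\<^sup>2 \<le> (norm (v - v') + norm (gw a - gw a')) * norm (z' - z)"
    using gw_strongly_monotone[OF z z'] by linarith
  hence "norm (z' - z) \<le> norm (v - v') + norm (gw a - gw a')"
    by (cases "norm (z' - z) = 0") (auto simp: power2_eq_square)
  thus ?thesis by (simp add: norm_minus_commute)
qed

lemma prox_point_unique: "a \<in> X \<Longrightarrow> is_prox_point a v z \<Longrightarrow> is_prox_point a v z' \<Longrightarrow> z = z'"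
  using prox_point_dist_le[of a a v z v z'] by simp

lemma prox_point_exists:
  assumes a: "a \<in> X"
  shows "\<exists>z. is_prox_point a v z"
proof -
  define f where "f u = inner v u + bregman w gw a u" for u
  \<comment> \<open>Strong convexity confines every candidate minimiser to a ball around \<open>a\<close>.\<close>
  define K where "K = X \<inter> cball a (2 * norm v)"
  have "compact K" unfolding K_def by (intro closed_Int_compact X_closed compact_cball)
  moreover have "K \<noteq> {}" using a unfolding K_def by auto
  moreover have "continuous_on K f"
  proof -
    have "continuous_on X w" by (rule has_derivative_continuous_on) (use w_deriv in blast)
    hence "continuous_on X f" unfolding f_def bregman_def by (intro continuous_intros)
    thus ?thesis by (rule continuous_on_subset) (auto simp: K_def)
  qed
  ultimately obtain z where z: "z \<in> K" and zmin: "\<forall>y\<in>K. f z \<le> f y"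
    using continuous_attains_inf by blast
  have "f z \<le> f u" if u: "u \<in> X" for u
  proof (cases "u \<in> K")
    case True thus ?thesis using zmin by blast
  next
    case False
    hence far: "norm (u - a) > 2 * norm v"
      using u unfolding K_def by (auto simp: dist_norm norm_minus_commute)
    have "f u \<ge> inner v u + (norm (u - a))\<^sup>2 / 2"
      unfolding f_def using bregman_ge_half_sq_dist[OF a u] by simp
    moreover have "inner v (u - a) \<ge> - (norm v * norm (u - a))"
      using norm_cauchy_schwarz[of "-v" "u - a"] by (simp add: inner_simps)
    moreover have "norm (u - a) * norm v < norm (u - a) * (norm (u - a) / 2)"
      using far by (intro mult_strict_left_mono) auto
    moreover have "f a = inner v a" unfolding f_def bregman_def by simp
    moreover have "f z \<le> f a" using zmin a unfolding K_def by auto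
    ultimately show ?thesis by (simp add: inner_simps power2_eq_square algebra_simps)
  qed
  thus ?thesis using z unfolding is_prox_point_def f_def K_def by auto
qed

definition prox :: "'a \<Rightarrow> 'a \<Rightarrow> 'a" where
  "prox a v = (THE z. is_prox_point a v z)"

lemma prox_is_prox_point: "a \<in> X \<Longrightarrow> is_prox_point a v (prox a v)"
  unfolding prox_def using prox_point_exists prox_point_unique by (metis theI')

lemma prox_eqI: "a \<in> X \<Longrightarrow> is_prox_point a v z \<Longrightarrow> prox a v = z"
  using prox_is_prox_point prox_point_unique by blast

lemma prox_in: "a \<in> X \<Longrightarrow> prox a v \<in> X"
  using prox_is_prox_point unfolding is_prox_point_def by blast

lemma prox_dist_le: assumes a: "a \<in> X" shows "norm (prox a v - a) \<le> 2 * norm v"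
proof -
  define z where "z = prox a v"
  have "is_prox_point a v z" unfolding z_def by (rule prox_is_prox_point[OF a])
  hence z: "z \<in> X" and le: "inner v z + bregman w gw a z \<le> inner v a + bregman w gw a a"
    using a unfolding is_prox_point_def by auto
  have "bregman w gw a a = 0" unfolding bregman_def by simp
  hence "(norm (z - a))\<^sup>2 / 2 \<le> inner v (a - z)"
    using le bregman_ge_half_sq_dist[OF a z] by (simp add: inner_simps)
  also have "\<dots> \<le> norm v * norm (z - a)"
    using norm_cauchy_schwarz[of v "a - z"] by (simp add: norm_minus_commute)
  finally have "(norm (z - a))\<^sup>2 \<le> 2 * norm v * norm (z - a)" by simp
  hence "norm (z - a) \<le> 2 * norm v"
    by (cases "norm (z - a) = 0") (auto simp: power2_eq_square)
  thus ?thesis unfolding z_def .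
qed

text \<open>Precomposing with the metric projection extends \<open>prox\<close> to the whole space; the extension
  is Lipschitz, which is what makes the iterates measurable functions of the samples.\<close>

definition prox_ext :: "'a \<Rightarrow> 'a \<Rightarrow> 'a" where
  "prox_ext a v = prox (closest_point X a) v"

lemma closest_point_in_X: "closest_point X a \<in> X"
  using closest_point_in_set[OF X_closed X_ne] .

lemma prox_ext_in: "prox_ext a v \<in> X"
  unfolding prox_ext_def by (rule prox_in[OF closest_point_in_X])

lemma prox_ext_eq: "a \<in> X \<Longrightarrow> prox_ext a v = prox a v"
  unfolding prox_ext_def using closest_point_self[of a X] by simp

lemma lipschitz_on_closest_point_comp:
  assumes "C-lipschitz_on X f"
  shows "C-lipschitz_on UNIV (\<lambda>a. f (closest_point X a))"
proof (rule lipschitz_onI)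
  have C: "C \<ge> 0" using assms by (rule lipschitz_on_nonneg)
  fix a b :: 'a
  have "dist (f (closest_point X a)) (f (closest_point X b))
          \<le> C * dist (closest_point X a) (closest_point X b)"
    using assms closest_point_in_X by (auto simp: lipschitz_on_def)
  also have "\<dots> \<le> C * dist a b"
    using closest_point_lipschitz[OF X_convex X_closed X_ne, of a b] C
    by (intro mult_left_mono) auto
  finally show "dist (f (closest_point X a)) (f (closest_point X b)) \<le> C * dist a b" .
qed (use assms lipschitz_on_nonneg in blast)

lemma prox_ext_lipschitz:
  assumes gw_lip: "Lw-lipschitz_on X gw"
  shows "norm (prox_ext a v - prox_ext a' v') \<le> norm (v - v') + Lw * norm (a - a')"
proof -
  have "norm (prox_ext a v - prox_ext a' v')
          \<le> norm (v - v') + norm (gw (closest_point X a) - gw (closest_point X a'))"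
    unfolding prox_ext_def by (intro prox_point_dist_le closest_point_in_X prox_is_prox_point)
  also have "norm (gw (closest_point X a) - gw (closest_point X a')) \<le> Lw * norm (a - a')"
    using lipschitz_on_closest_point_comp[OF gw_lip] by (auto simp: lipschitz_on_def dist_norm)
  finally show ?thesis by simp
qed

lemma prox_ext_continuous:
  assumes gw_lip: "Lw-lipschitz_on X gw"
  shows "continuous_on UNIV (\<lambda>p. prox_ext (fst p) (snd p))"
proof -
  have Lw: "Lw \<ge> 0" using gw_lip by (rule lipschitz_on_nonneg)
  have "(1 + Lw)-lipschitz_on UNIV (\<lambda>p. prox_ext (fst p) (snd p))"
  proof (rule lipschitz_onI)
    fix p q :: "'a \<times> 'a"
    have "dist (prox_ext (fst p) (snd p)) (prox_ext (fst q) (snd q))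
            \<le> norm (snd p - snd q) + Lw * norm (fst p - fst q)"
      using prox_ext_lipschitz[OF gw_lip] by (simp add: dist_norm)
    also have "\<dots> \<le> dist p q + Lw * dist p q"
      using Lw dist_snd_le[of p q] dist_fst_le[of p q]
      by (intro add_mono mult_left_mono) (auto simp: dist_norm)
    finally show "dist (prox_ext (fst p) (snd p)) (prox_ext (fst q) (snd q)) \<le> (1 + Lw) * dist p q"
      by (simp add: algebra_simps)
  qed (use Lw in simp)
  thus ?thesis by (rule lipschitz_on_continuous_on)
qed

end

section \<open>Mini-batch oracle noise\<close>

locale stochastic_oracle =
  fixes X :: "'a::euclidean_space set" and F :: "'a \<Rightarrow> 'a" and G :: "'a \<Rightarrow> 's \<Rightarrow> 'a"
    and D :: "'s measure" and \<sigma> :: real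
  assumes D_prob: "prob_space D"
    and G_meas: "(\<lambda>(z, s). G z s) \<in> borel_measurable (borel \<Otimes>\<^sub>M D)"
    and G_oracle: "\<forall>z\<in>X. integrable D (G z) \<and> (\<integral>s. G z s \<partial>D) = F z \<and>
                     (\<integral>\<^sup>+ s. ennreal ((norm (G z s - F z))\<^sup>2) \<partial>D) \<le> ennreal (\<sigma>\<^sup>2)"
begin

text \<open>Samples are indexed by pairs \<open>(t, i)\<close>: iteration \<open>t\<close>, position \<open>i\<close> in the mini-batch.\<close>

definition minibatch :: "nat \<Rightarrow> 'a \<Rightarrow> nat \<Rightarrow> (nat \<times> nat \<Rightarrow> 's) \<Rightarrow> 'a" where
  "minibatch m z t \<xi> = (1 / real m) *\<^sub>R (\<Sum>i<m. G z (\<xi> (t, i)))"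

lemma prob_space_PiM_D: "prob_space (PiM K (\<lambda>_. D))"
  by (rule prob_space_PiM) (use D_prob in auto)

lemma product_prob_space_D: "product_prob_space (\<lambda>_::nat \<times> nat. D)"
  unfolding product_prob_space_def product_prob_space_axioms_def product_sigma_finite_def
  using D_prob prob_space_imp_sigma_finite by auto

lemma G_measurable_comp:
  assumes f: "f \<in> borel_measurable N" and g: "g \<in> measurable N D"
  shows "(\<lambda>\<xi>. G (f \<xi>) (g \<xi>)) \<in> borel_measurable N"
proof -
  have "(\<lambda>\<xi>. (f \<xi>, g \<xi>)) \<in> measurable N (borel \<Otimes>\<^sub>M D)"
    by (intro measurable_Pair f g)
  from measurable_compose[OF this G_meas] show ?thesis by simp
qed

lemma G_measurable[measurable]: "G z \<in> borel_measurable D"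
  using G_measurable_comp[of "\<lambda>_. z" D "\<lambda>s. s"] by simp

lemma minibatch_measurable:
  assumes f: "f \<in> borel_measurable (PiM K (\<lambda>_. D))" and K: "\<And>i. i < m \<Longrightarrow> (t, i) \<in> K"
  shows "(\<lambda>\<xi>. minibatch m (f \<xi>) t \<xi>) \<in> borel_measurable (PiM K (\<lambda>_. D))"
  unfolding minibatch_def
  by (intro borel_measurable_scaleR borel_measurable_const borel_measurable_sum G_measurable_comp f
        measurable_component_singleton K) auto

lemma distr_PiM_component_D: "p \<in> K \<Longrightarrow> distr (PiM K (\<lambda>_. D)) D (\<lambda>y. y p) = D"
  using distr_PiM_component[of K "\<lambda>_. D" p] D_prob by auto

lemma nn_integral_PiM_component:
  assumes p: "p \<in> K" and f: "f \<in> borel_measurable D"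
  shows "(\<integral>\<^sup>+ y. f (y p) \<partial>PiM K (\<lambda>_. D)) = integral\<^sup>N D f"
  using nn_integral_distr[of "\<lambda>y. y p" "PiM K (\<lambda>_. D)" D f] p f
  by (simp add: distr_PiM_component_D)

lemma integral_PiM_component:
  fixes f :: "'s \<Rightarrow> 'b::{banach, second_countable_topology}"
  assumes p: "p \<in> K" and f: "f \<in> borel_measurable D"
  shows "(\<integral> y. f (y p) \<partial>PiM K (\<lambda>_. D)) = integral\<^sup>L D f"
  using integral_distr[of "\<lambda>y. y p" "PiM K (\<lambda>_. D)" D f] p f
  by (simp add: distr_PiM_component_D)

lemma integrable_PiM_component:
  fixes f :: "'s \<Rightarrow> 'b::{banach, second_countable_topology}"
  assumes p: "p \<in> K" and f: "integrable D f"
  shows "integrable (PiM K (\<lambda>_. D)) (\<lambda>y. f (y p))"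
  using integrable_distr_eq[of "\<lambda>y. y p" "PiM K (\<lambda>_. D)" D f] p f
  by (simp add: distr_PiM_component_D)

lemma noise_integrable: "z \<in> X \<Longrightarrow> integrable D (\<lambda>s. G z s - F z)"
  using G_oracle D_prob
  by (auto intro!: Bochner_Integration.integrable_diff finite_measure.integrable_const
                   prob_space.finite_measure)

lemma noise_integral_zero: "z \<in> X \<Longrightarrow> (\<integral>s. G z s - F z \<partial>D) = 0"
proof -
  assume z: "z \<in> X"
  interpret prob_space D by (rule D_prob)
  have "(\<integral>s. G z s - F z \<partial>D) = (\<integral>s. G z s \<partial>D) - (\<integral>s. F z \<partial>D)"
    using G_oracle z by (intro Bochner_Integration.integral_diff) auto
  thus ?thesis using G_oracle z by (simp add: prob_space)
qed

lemma
  assumes z: "z \<in> X" and p: "p \<in> K"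
  shows noise_sq_integrable: "integrable (PiM K (\<lambda>_. D)) (\<lambda>y. (norm (G z (y p) - F z))\<^sup>2)"
    and noise_sq_integral_le: "(\<integral>y. (norm (G z (y p) - F z))\<^sup>2 \<partial>PiM K (\<lambda>_. D)) \<le> \<sigma>\<^sup>2"
proof -
  have nn: "(\<integral>\<^sup>+ y. ennreal ((norm (G z (y p) - F z))\<^sup>2) \<partial>PiM K (\<lambda>_. D)) \<le> ennreal (\<sigma>\<^sup>2)"
    using nn_integral_PiM_component[OF p, of "\<lambda>s. ennreal ((norm (G z s - F z))\<^sup>2)"] G_oracle z
    by auto
  have m: "(\<lambda>y. (norm (G z (y p) - F z))\<^sup>2) \<in> borel_measurable (PiM K (\<lambda>_. D))"
    using p by (intro borel_measurable_power borel_measurable_norm borel_measurable_diff G_measurable_comp)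
      auto
  show i: "integrable (PiM K (\<lambda>_. D)) (\<lambda>y. (norm (G z (y p) - F z))\<^sup>2)"
    by (rule integrableI_nonneg[OF m]) (auto intro: order.strict_trans1[OF nn])
  show "(\<integral>y. (norm (G z (y p) - F z))\<^sup>2 \<partial>PiM K (\<lambda>_. D)) \<le> \<sigma>\<^sup>2"
    using nn nn_integral_eq_integral[OF i] by (simp add: ennreal_le_iff)
qed

lemma
  fixes K :: "(nat \<times> nat) set"
  assumes z: "z \<in> X" and fin: "finite K" and p: "p \<in> K" and q: "q \<in> K" and pq: "p \<noteq> q"
  shows noise_inner_integrable:
      "integrable (PiM K (\<lambda>_. D)) (\<lambda>y. inner (G z (y p) - F z) (G z (y q) - F z))"
    and noise_inner_integral_zero:
      "(\<integral>y. inner (G z (y p) - F z) (G z (y q) - F z) \<partial>PiM K (\<lambda>_. D)) = 0"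
proof -
  interpret PP: product_prob_space "\<lambda>_::nat \<times> nat. D" by (rule product_prob_space_D)
  let ?f = "\<lambda>y. inner (G z (y p) - F z) (G z (y q) - F z)"
  show int: "integrable (PiM K (\<lambda>_. D)) ?f"
  proof (rule Bochner_Integration.integrable_bound)
    show "integrable (PiM K (\<lambda>_. D)) (\<lambda>y. (norm (G z (y p) - F z))\<^sup>2 + (norm (G z (y q) - F z))\<^sup>2)"
      using noise_sq_integrable[OF z p] noise_sq_integrable[OF z q] by auto
    show "?f \<in> borel_measurable (PiM K (\<lambda>_. D))"
      using p q by (intro borel_measurable_inner borel_measurable_diff G_measurable_comp) auto
    show "AE y in PiM K (\<lambda>_. D).
            norm (?f y) \<le> norm ((norm (G z (y p) - F z))\<^sup>2 + (norm (G z (y q) - F z))\<^sup>2)"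
    proof (intro AE_I2)
      fix y
      let ?a = "G z (y p) - F z" and ?b = "G z (y q) - F z"
      have "\<bar>inner ?a ?b\<bar> \<le> norm ?a * norm ?b" by (rule Cauchy_Schwarz_ineq2)
      also have "\<dots> \<le> (norm ?a)\<^sup>2 + (norm ?b)\<^sup>2"
        using sum_squares_bound[of "norm ?a" "norm ?b"]
          mult_nonneg_nonneg[OF norm_ge_zero norm_ge_zero, of ?a ?b] by linarith
      finally show "norm (?f y) \<le> norm ((norm ?a)\<^sup>2 + (norm ?b)\<^sup>2)" by simp
    qed
  qed
  \<comment> \<open>Integrate out the coordinate \<open>q\<close> first: the noise at \<open>q\<close> is centred and independent of the
      rest.\<close>
  define J where "J = K - {q}"
  have KJ: "K = J \<union> {q}" and JQ: "J \<inter> {q} = {}" and pJ: "p \<in> J" and fJ: "finite J"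
    using p q pq fin unfolding J_def by auto
  have "(\<integral>y. ?f y \<partial>PiM K (\<lambda>_. D))
          = (\<integral>x. (\<integral>y. ?f (merge J {q} (x, y)) \<partial>PiM {q} (\<lambda>_. D)) \<partial>PiM J (\<lambda>_. D))"
    using int unfolding KJ by (intro PP.product_integral_fold[OF JQ fJ]) simp
  also have "\<dots> = (\<integral>x. 0 \<partial>PiM J (\<lambda>_. D))"
  proof (rule Bochner_Integration.integral_cong[OF refl])
    fix x
    have "(\<integral>y. ?f (merge J {q} (x, y)) \<partial>PiM {q} (\<lambda>_. D))
            = (\<integral>y. inner (G z (x p) - F z) (G z (y q) - F z) \<partial>PiM {q} (\<lambda>_. D))"
      using JQ pJ by (intro Bochner_Integration.integral_cong) auto
    also have "\<dots> = inner (G z (x p) - F z) (\<integral>y. G z (y q) - F z \<partial>PiM {q} (\<lambda>_. D))"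
      by (rule integral_inner_right) (intro integrable_PiM_component noise_integrable z, simp)
    also have "(\<integral>y. G z (y q) - F z \<partial>PiM {q} (\<lambda>_. D)) = (\<integral>s. G z s - F z \<partial>D)"
      by (rule integral_PiM_component[of q "{q}" "\<lambda>s. G z s - F z"]) auto
    finally show "(\<integral>y. ?f (merge J {q} (x, y)) \<partial>PiM {q} (\<lambda>_. D)) = 0"
      using noise_integral_zero[OF z] by simp
  qed
  finally show "(\<integral>y. ?f y \<partial>PiM K (\<lambda>_. D)) = 0" by simp
qed

lemma minibatch_noise_sq_le:
  fixes K :: "(nat \<times> nat) set"
  assumes z: "z \<in> X" and fin: "finite K" and B: "{t} \<times> {..<m} \<subseteq> K" and m: "m > 0"
  shows "(\<integral>\<^sup>+ y. ennreal ((norm (minibatch m z t y - F z))\<^sup>2) \<partial>PiM K (\<lambda>_. D))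
           \<le> ennreal (\<sigma>\<^sup>2 / real m)"
proof -
  let ?Q = "PiM K (\<lambda>_. D)"
  define e where "e i y = G z (y (t, i)) - F z" for i :: nat and y
  define S where "S y = (\<Sum>i<m. e i y)" for y
  have tiK: "i < m \<Longrightarrow> (t, i) \<in> K" for i using B by auto
  have S_eq: "minibatch m z t y - F z = (1 / real m) *\<^sub>R S y" for y
    using m unfolding minibatch_def S_def e_def
    by (simp add: sum_subtractf sum_constant_scaleR scaleR_diff_right)
  have sqS: "(norm (S y))\<^sup>2 = (\<Sum>i<m. \<Sum>j<m. inner (e i y) (e j y))" for y
    unfolding S_def power2_norm_eq_inner by (subst inner_sum_left) (simp add: inner_sum_right)
  have intij: "integrable ?Q (\<lambda>y. inner (e i y) (e j y))" if "i < m" "j < m" for i j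
    using noise_sq_integrable[OF z tiK[OF that(1)]] noise_inner_integrable[OF z fin tiK[OF that(1)] tiK[OF that(2)]]
    unfolding e_def by (cases "i = j") (auto simp: power2_norm_eq_inner)
  \<comment> \<open>The noises of distinct samples are uncorrelated, so only the diagonal survives.\<close>
  have intval: "(\<integral>y. inner (e i y) (e j y) \<partial>?Q) = (if j = i then (\<integral>y. (norm (e i y))\<^sup>2 \<partial>?Q) else 0)"
    if "i < m" "j < m" for i j
    using noise_inner_integral_zero[OF z fin tiK[OF that(1)] tiK[OF that(2)]]
    unfolding e_def by (cases "i = j") (auto simp: power2_norm_eq_inner)
  have intS: "integrable ?Q (\<lambda>y. (norm (S y))\<^sup>2)" unfolding sqS
    by (intro Bochner_Integration.integrable_sum intij) auto
  have "(\<integral>y. (norm (S y))\<^sup>2 \<partial>?Q) = (\<Sum>i<m. \<Sum>j<m. (\<integral>y. inner (e i y) (e j y) \<partial>?Q))"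
    unfolding sqS
  proof (subst Bochner_Integration.integral_sum)
    show "\<And>i. i \<in> {..<m} \<Longrightarrow> integrable ?Q (\<lambda>y. \<Sum>j<m. inner (e i y) (e j y))"
      by (intro Bochner_Integration.integrable_sum intij) auto
    show "(\<Sum>i<m. \<integral>y. (\<Sum>j<m. inner (e i y) (e j y)) \<partial>?Q)
            = (\<Sum>i<m. \<Sum>j<m. (\<integral>y. inner (e i y) (e j y) \<partial>?Q))"
      by (intro sum.cong refl Bochner_Integration.integral_sum intij) auto
  qed
  also have "\<dots> = (\<Sum>i<m. (\<integral>y. (norm (e i y))\<^sup>2 \<partial>?Q))"
    by (rule sum.cong[OF refl]) (simp add: intval)
  also have "\<dots> \<le> (\<Sum>i<m. \<sigma>\<^sup>2)"
    by (rule sum_mono) (use noise_sq_integral_le[OF z tiK] in \<open>auto simp: e_def\<close>)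
  finally have bS: "(\<integral>y. (norm (S y))\<^sup>2 \<partial>?Q) \<le> real m * \<sigma>\<^sup>2" by simp
  have "(\<integral>\<^sup>+ y. ennreal ((norm (minibatch m z t y - F z))\<^sup>2) \<partial>?Q)
          = ennreal (\<integral>y. (1 / real m)\<^sup>2 * (norm (S y))\<^sup>2 \<partial>?Q)"
    unfolding S_eq using intS
    by (subst nn_integral_eq_integral[symmetric]) (auto simp: power_divide)
  also have "\<dots> \<le> ennreal (\<sigma>\<^sup>2 / real m)"
  proof (rule ennreal_leI)
    have "(\<integral>y. (1 / real m)\<^sup>2 * (norm (S y))\<^sup>2 \<partial>?Q) \<le> (1 / real m)\<^sup>2 * (real m * \<sigma>\<^sup>2)"
      using bS by (simp add: mult_left_mono)
    thus "(\<integral>y. (1 / real m)\<^sup>2 * (norm (S y))\<^sup>2 \<partial>?Q) \<le> \<sigma>\<^sup>2 / real m"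
      using m by (simp add: power2_eq_square field_simps)
  qed
  finally show ?thesis .
qed

lemma
  fixes K :: "(nat \<times> nat) set"
  assumes z: "z \<in> X" and B: "{t} \<times> {..<m} \<subseteq> K" and m: "m > 0"
  shows minibatch_noise_integrable: "integrable (PiM K (\<lambda>_. D)) (\<lambda>y. minibatch m z t y - F z)"
    and minibatch_noise_integral_zero: "(\<integral>y. minibatch m z t y - F z \<partial>PiM K (\<lambda>_. D)) = 0"
proof -
  interpret Q: prob_space "PiM K (\<lambda>_. D)" by (rule prob_space_PiM_D)
  have tiK: "i < m \<Longrightarrow> (t, i) \<in> K" for i using B by auto
  have ii: "i < m \<Longrightarrow> integrable (PiM K (\<lambda>_. D)) (\<lambda>y. G z (y (t, i)))" for i
    using integrable_PiM_component[OF tiK, of i "G z"] G_oracle z by auto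
  hence isc: "integrable (PiM K (\<lambda>_. D)) (\<lambda>y. minibatch m z t y)"
    unfolding minibatch_def
    by (intro Bochner_Integration.integrable_scaleR_right Bochner_Integration.integrable_sum) auto
  thus "integrable (PiM K (\<lambda>_. D)) (\<lambda>y. minibatch m z t y - F z)" by auto
  have "(\<integral>y. minibatch m z t y - F z \<partial>PiM K (\<lambda>_. D))
          = (1 / real m) *\<^sub>R (\<Sum>i<m. (\<integral>y. G z (y (t, i)) \<partial>PiM K (\<lambda>_. D))) - F z"
    using ii isc unfolding minibatch_def
    by (subst Bochner_Integration.integral_diff)
       (auto intro!: Bochner_Integration.integral_sum simp: Q.prob_space)
  also have "(\<Sum>i<m. (\<integral>y. G z (y (t, i)) \<partial>PiM K (\<lambda>_. D))) = (\<Sum>i<m. F z)"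
    by (intro sum.cong refl) (use integral_PiM_component[OF tiK, of _ "G z"] G_oracle z in auto)
  finally show "(\<integral>y. minibatch m z t y - F z \<partial>PiM K (\<lambda>_. D)) = 0"
    using m by (simp add: sum_constant_scaleR)
qed

end

section \<open>The iteration as a function of the samples\<close>

locale soe = bregman_setup X w gw + stochastic_oracle X F G D \<sigma>
  for X :: "'a::euclidean_space set" and w gw F G and D :: "'s measure" and \<sigma> +
  fixes L Lw :: real and m :: nat and x1 xs :: 'a
  assumes F_lip: "L-lipschitz_on X F" and L_pos: "L > 0"
    and gw_lip: "Lw-lipschitz_on X gw"
    and m_pos: "m > 0"
    and x1_in: "x1 \<in> X" and xs_in: "xs \<in> X"
    and xs_sol: "\<forall>z\<in>X. inner (F xs) (z - xs) \<ge> 0 \<and> inner (F z) (z - xs) \<ge> 0"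
begin

lemma F_lipD: "a \<in> X \<Longrightarrow> b \<in> X \<Longrightarrow> norm (F a - F b) \<le> L * norm (a - b)"
  using F_lip unfolding lipschitz_on_def by (auto simp: dist_norm)

lemma gw_lipD: "a \<in> X \<Longrightarrow> b \<in> X \<Longrightarrow> norm (gw a - gw b) \<le> Lw * norm (a - b)"
  using gw_lip unfolding lipschitz_on_def by (auto simp: dist_norm)

definition F_ext :: "'a \<Rightarrow> 'a" where "F_ext a = F (closest_point X a)"

lemma F_ext_eq: "a \<in> X \<Longrightarrow> F_ext a = F a"
  unfolding F_ext_def using closest_point_self[of a X] by simp

lemma F_ext_measurable[measurable]: "F_ext \<in> borel_measurable borel"
  unfolding F_ext_def
  using lipschitz_on_continuous_on[OF lipschitz_on_closest_point_comp[OF F_lip]]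
  by (rule borel_measurable_continuous_onI)

text \<open>Index \<open>0\<close> carries the paper's
  \<open>x\<^sub>0 = x\<^sub>1\<close>, and the case \<open>t = 0\<close> of the last equation is the convention
  \<open>F~(x\<^sub>0) = F~(x\<^sub>1)\<close> for the oracle estimates, which switches off the extrapolation in the
  first step.\<close>

fun soe_iter :: "(nat \<Rightarrow> real) \<Rightarrow> (nat \<Rightarrow> real) \<Rightarrow> nat \<Rightarrow> (nat \<times> nat \<Rightarrow> 's) \<Rightarrow> 'a" where
  "soe_iter gam lam 0 \<xi> = x1"
| "soe_iter gam lam (Suc 0) \<xi> = x1"
| "soe_iter gam lam (Suc (Suc t)) \<xi> =
     (let a = soe_iter gam lam (Suc t) \<xi>; Ft = minibatch m a (Suc t) \<xi>;
          Fp = (if t = 0 then Ft else minibatch m (soe_iter gam lam t \<xi>) t \<xi>)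
      in prox_ext a (gam (Suc t) *\<^sub>R (Ft + lam (Suc t) *\<^sub>R (Ft - Fp))))"

lemma soe_iter_start: "t \<le> 1 \<Longrightarrow> soe_iter gam lam t = (\<lambda>_. x1)"
  by (cases t) (auto simp: fun_eq_iff)

lemma soe_iter_in: "soe_iter gam lam t \<xi> \<in> X"
  by (induction gam lam t \<xi> rule: soe_iter.induct) (auto simp: x1_in prox_ext_in Let_def)

abbreviation iter_est :: "(nat \<Rightarrow> real) \<Rightarrow> (nat \<Rightarrow> real) \<Rightarrow> nat \<Rightarrow> (nat \<times> nat \<Rightarrow> 's) \<Rightarrow> 'a" where
  "iter_est gam lam t \<xi> \<equiv> minibatch m (soe_iter gam lam t \<xi>) t \<xi>"

lemma soe_iter_is_prox_point:
  assumes "t \<ge> 1"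
  shows "is_prox_point (soe_iter gam lam t \<xi>)
           (gam t *\<^sub>R (iter_est gam lam t \<xi> + lam t *\<^sub>R (iter_est gam lam t \<xi>
              - (if t = 1 then iter_est gam lam 1 \<xi> else iter_est gam lam (t - 1) \<xi>))))
           (soe_iter gam lam (Suc t) \<xi>)"
proof -
  obtain s where ts: "t = Suc s" using assms by (cases t) auto
  have "soe_iter gam lam t \<xi> \<in> X" by (rule soe_iter_in)
  thus ?thesis
    using prox_is_prox_point prox_ext_eq ts by (cases "s = 0") (auto simp: Let_def)
qed

lemma soe_iter_depends:
  "(\<forall>p\<in>{1..<t} \<times> {..<m}. \<xi> p = \<xi>' p) \<Longrightarrow> soe_iter gam lam t \<xi> = soe_iter gam lam t \<xi>'"
proof (induction gam lam t \<xi> rule: soe_iter.induct)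
  case (3 gam lam t \<xi>)
  have "soe_iter gam lam (Suc t) \<xi> = soe_iter gam lam (Suc t) \<xi>'"
    using 3(3) by (intro 3(1)) auto
  moreover have "t \<noteq> 0 \<Longrightarrow> soe_iter gam lam t \<xi> = soe_iter gam lam t \<xi>'"
    using 3(3) by (intro 3(2)[OF refl refl]) auto
  moreover have "s \<in> {t, Suc t} \<Longrightarrow> s \<noteq> 0 \<Longrightarrow> minibatch m z s \<xi> = minibatch m z s \<xi>'" for z s
    unfolding minibatch_def using 3(3) by (intro arg_cong[where f="\<lambda>x. _ *\<^sub>R x"] sum.cong) auto
  ultimately show ?case by (simp add: Let_def)
qed auto

lemma soe_iter_measurable:
  "{1..<t} \<times> {..<m} \<subseteq> K \<Longrightarrow> soe_iter gam lam t \<in> borel_measurable (PiM K (\<lambda>_. D))"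
proof (induction gam lam t "undefined :: nat \<times> nat \<Rightarrow> 's" arbitrary: K rule: soe_iter.induct)
  case (3 gam lam t)
  let ?M = "PiM K (\<lambda>_. D)"
  have h1: "soe_iter gam lam (Suc t) \<in> borel_measurable ?M"
    using 3(3) by (intro 3(1)) auto
  have h2: "t \<noteq> 0 \<Longrightarrow> soe_iter gam lam t \<in> borel_measurable ?M"
    using 3(3) by (intro 3(2)[OF refl refl]) auto
  have e1: "(\<lambda>\<xi>. minibatch m (soe_iter gam lam (Suc t) \<xi>) (Suc t) \<xi>) \<in> borel_measurable ?M"
    using 3(3) by (intro minibatch_measurable h1) auto
  have e2: "t \<noteq> 0 \<Longrightarrow> (\<lambda>\<xi>. minibatch m (soe_iter gam lam t \<xi>) t \<xi>) \<in> borel_measurable ?M"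
    using 3(3) by (intro minibatch_measurable h2) auto
  define v where "v \<xi> = (let a = soe_iter gam lam (Suc t) \<xi>; Ft = minibatch m a (Suc t) \<xi>;
          Fp = (if t = 0 then Ft else minibatch m (soe_iter gam lam t \<xi>) t \<xi>)
      in gam (Suc t) *\<^sub>R (Ft + lam (Suc t) *\<^sub>R (Ft - Fp)))" for \<xi>
  have "v \<in> borel_measurable ?M"
    using e1 e2 unfolding v_def Let_def by (cases "t = 0") auto
  moreover have "soe_iter gam lam (Suc (Suc t)) = (\<lambda>\<xi>. prox_ext (soe_iter gam lam (Suc t) \<xi>) (v \<xi>))"
    unfolding v_def by (auto simp: Let_def fun_eq_iff)
  ultimately show ?case
    using borel_measurable_continuous_Pair[OF h1 _ prox_ext_continuous[OF gw_lip]] by simp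
qed (simp_all add: soe_iter_start)

end

section \<open>Pathwise energy inequality\<close>

lemma young_mult_le: "(x::real) * y \<le> y\<^sup>2 / 8 + 2 * x\<^sup>2"
  using sum_squares_bound[of "4 * x" y] by (simp add: power2_eq_square)

lemma add_sq_le: "((a::real) + b)\<^sup>2 \<le> 2 * a\<^sup>2 + 2 * b\<^sup>2"
  using sum_squares_bound[of a b] by (simp add: power2_sum)

lemma norm_diff_sq_le:
  "(norm ((a::'a::real_normed_vector) - b))\<^sup>2 \<le> 2 * (norm a)\<^sup>2 + 2 * (norm b)\<^sup>2"
proof -
  have "(norm (a - b))\<^sup>2 \<le> (norm a + norm b)\<^sup>2"
    by (intro power_mono norm_triangle_ineq4) auto
  thus ?thesis using add_sq_le[of "norm a" "norm b"] by linarith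
qed

lemma norm_extrapolation_le:
  "norm (c *\<^sub>R (x + l *\<^sub>R (x - y))) \<le> \<bar>c\<bar> * ((1 + \<bar>l\<bar>) * norm x + \<bar>l\<bar> * norm (y::'a::real_normed_vector))"
proof -
  have "norm (x + l *\<^sub>R (x - y)) \<le> norm x + \<bar>l\<bar> * norm (x - y)"
    using norm_triangle_ineq[of x "l *\<^sub>R (x - y)"] by simp
  also have "\<dots> \<le> norm x + \<bar>l\<bar> * (norm x + norm y)"
    by (intro add_left_mono mult_left_mono norm_triangle_ineq4) auto
  finally have "norm (x + l *\<^sub>R (x - y)) \<le> (1 + \<bar>l\<bar>) * norm x + \<bar>l\<bar> * norm y"
    by (simp add: algebra_simps)
  thus ?thesis by (simp add: mult_left_mono)
qed

text \<open>Summing the one-step inequalities of the method: the Bregman terms telescope thanks to the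
  monotonicity of the weights, the inner-product terms \<open>r\<close> telescope exactly, and each
  step-length term \<open>d\<close> is charged once at weight \<open>1/4\<close> and once at weight \<open>1/8\<close>.\<close>

lemma energy_telescope:
  fixes \<theta> V d r N Y :: "nat \<Rightarrow> real"
  assumes step: "\<And>t. t \<in> {1..k} \<Longrightarrow> \<theta> t * d t / 2 + Y t
      \<le> \<theta> t * V t - \<theta> t * V (Suc t) + r t - (if t = 1 then 0 else r (t - 1))
         + \<theta> t * d t / 4 + (if t = 1 then 0 else \<theta> (t - 1) * d (t - 1) / 8) + N t"
    and \<theta>_mono: "\<And>t. t \<in> {2..k} \<Longrightarrow> \<theta> t \<le> \<theta> (t - 1)"
    and V_nonneg: "\<And>t. V t \<ge> 0"
    and n: "n \<in> {1..k}"
  shows "(\<Sum>t=1..n. \<theta> t * d t) / 8 + (\<Sum>t=1..n. Y t)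
           \<le> \<theta> 1 * V 1 - \<theta> n * V (Suc n) + r n - \<theta> n * d n / 8 + (\<Sum>t=1..n. N t)"
  using n
proof (induction n)
  case 0 thus ?case by simp
next
  case (Suc n)
  show ?case
  proof (cases "n = 0")
    case True
    thus ?thesis using step[of 1] Suc.prems by simp
  next
    case False
    hence n: "n \<in> {1..k}" and Sn: "Suc n \<in> {2..k}" using Suc.prems by auto
    have "\<theta> (Suc n) * V (Suc n) \<le> \<theta> n * V (Suc n)"
      using \<theta>_mono[OF Sn] V_nonneg by (intro mult_right_mono) auto
    thus ?thesis using Suc.IH[OF n] step[OF Suc.prems] False by (simp add: add_divide_distrib)
  qed
qed

context soe
begin

lemma extrapolation_cross_term_le:
  fixes \<theta> \<theta>' \<gamma> l :: real
  assumes a: "a \<in> X" and ap: "ap \<in> X"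
    and nonneg: "\<theta> \<ge> 0" "\<gamma> \<ge> 0" "l \<ge> 0"
    and weights: "\<theta>' \<ge> 16 * L\<^sup>2 * \<gamma>\<^sup>2 * l\<^sup>2 * \<theta>"
  shows "- (\<theta> * \<gamma> * l * inner (Fa - Fap) (z - a))
           \<le> \<theta> * (norm (z - a))\<^sup>2 / 4 + \<theta>' * (norm (a - ap))\<^sup>2 / 8
             + 4 * \<theta> * \<gamma>\<^sup>2 * l\<^sup>2 * ((norm (Fa - F a))\<^sup>2 + (norm (Fap - F ap))\<^sup>2)"
proof -
  define dt dp e where "dt = norm (z - a)" and "dp = norm (a - ap)"
    and "e = norm ((Fa - F a) - (Fap - F ap))"
  have "Fa - Fap = (F a - F ap) + ((Fa - F a) - (Fap - F ap))" by (simp add: algebra_simps)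
  hence "norm (Fa - Fap) \<le> norm (F a - F ap) + e" unfolding e_def by (metis norm_triangle_ineq)
  hence "norm (Fa - Fap) \<le> L * dp + e" using F_lipD[OF a ap] unfolding dp_def by linarith
  moreover have "- inner (Fa - Fap) (z - a) \<le> norm (Fa - Fap) * dt"
    using norm_cauchy_schwarz[of "- (Fa - Fap)" "z - a"] unfolding dt_def
    by (simp only: inner_minus_left norm_minus_cancel)
  moreover have "norm (Fa - Fap) * dt \<le> (L * dp + e) * dt"
    using calculation(1) unfolding dt_def by (rule mult_right_mono) simp
  ultimately have "- inner (Fa - Fap) (z - a) \<le> (L * dp + e) * dt" by linarith
  from mult_left_mono[OF this, of "\<theta> * \<gamma> * l"] nonneg
  have cs: "- (\<theta> * \<gamma> * l * inner (Fa - Fap) (z - a))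
              \<le> \<theta> * ((\<gamma> * l * L * dp) * dt) + \<theta> * ((\<gamma> * l * e) * dt)"
    by (simp add: algebra_simps)
  have "\<theta> * ((\<gamma> * l * L * dp) * dt) \<le> \<theta> * (dt\<^sup>2 / 8 + 2 * (\<gamma> * l * L * dp)\<^sup>2)"
    using young_mult_le nonneg by (intro mult_left_mono) auto
  moreover have "16 * L\<^sup>2 * \<gamma>\<^sup>2 * l\<^sup>2 * \<theta> * dp\<^sup>2 \<le> \<theta>' * dp\<^sup>2"
    using weights by (intro mult_right_mono) auto
  moreover have "\<theta> * ((\<gamma> * l * e) * dt) \<le> \<theta> * (dt\<^sup>2 / 8 + 2 * (\<gamma> * l * e)\<^sup>2)"
    using young_mult_le nonneg by (intro mult_left_mono) auto
  moreover have "\<theta> * \<gamma>\<^sup>2 * l\<^sup>2 * e\<^sup>2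
                   \<le> \<theta> * \<gamma>\<^sup>2 * l\<^sup>2 * (2 * (norm (Fa - F a))\<^sup>2 + 2 * (norm (Fap - F ap))\<^sup>2)"
    unfolding e_def using nonneg by (intro mult_left_mono norm_diff_sq_le) auto
  ultimately show ?thesis
    using cs unfolding dt_def[symmetric] dp_def[symmetric]
    by (simp add: power_mult_distrib algebra_simps)
qed

lemma energy_step:
  fixes gam lam \<theta> :: "nat \<Rightarrow> real" and xx Fe :: "nat \<Rightarrow> 'a" and k t :: nat
  assumes nonneg: "\<forall>t. gam t \<ge> 0 \<and> lam t \<ge> 0 \<and> \<theta> t \<ge> 0"
    and xin: "\<forall>t. xx t \<in> X"
    and step: "\<forall>t\<in>{1..k}. is_prox_point (xx t)
                 (gam t *\<^sub>R (Fe t + lam t *\<^sub>R (Fe t - (if t = 1 then Fe 1 else Fe (t - 1)))))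
                 (xx (Suc t))"
    and cond: "\<forall>t\<in>{1..k}. \<theta> (t + 1) * gam (t + 1) * lam (t + 1) = gam t * \<theta> t \<and>
                 \<theta> (t - 1) \<ge> 16 * L\<^sup>2 * (gam t)\<^sup>2 * (lam t)\<^sup>2 * \<theta> t \<and> \<theta> t \<le> \<theta> (t - 1)"
    and t: "t \<in> {1..k}"
  shows "\<theta> t * (norm (xx (Suc t) - xx t))\<^sup>2 / 2
           + \<theta> t * gam t * inner (Fe (Suc t) - F (xx (Suc t))) (xx (Suc t) - xs)
   \<le> \<theta> t * bregman w gw (xx t) xs - \<theta> t * bregman w gw (xx (Suc t)) xs
     + \<theta> t * gam t * inner (Fe (Suc t) - Fe t) (xx (Suc t) - xs)
     - (if t = 1 then 0 else \<theta> (t - 1) * gam (t - 1) * inner (Fe t - Fe (t - 1)) (xx t - xs))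
     + \<theta> t * (norm (xx (Suc t) - xx t))\<^sup>2 / 4
     + (if t = 1 then 0 else \<theta> (t - 1) * (norm (xx t - xx (t - 1)))\<^sup>2 / 8)
     + (if t = 1 then 0 else 4 * \<theta> t * (gam t)\<^sup>2 * (lam t)\<^sup>2 *
          ((norm (Fe t - F (xx t)))\<^sup>2 + (norm (Fe (t - 1) - F (xx (t - 1))))\<^sup>2))"
proof -
  define a z where "a = xx t" and "z = xx (Suc t)"
  define Dl where "Dl = Fe t - (if t = 1 then Fe 1 else Fe (t - 1))"
  have a: "a \<in> X" and z: "z \<in> X" using xin by (auto simp: a_def z_def)
  have th: "\<theta> t \<ge> 0" and ga: "gam t \<ge> 0" and la: "lam t \<ge> 0" using nonneg by auto
  have prox: "is_prox_point a (gam t *\<^sub>R (Fe t + lam t *\<^sub>R Dl)) z"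
    using step t unfolding a_def z_def Dl_def by auto
  \<comment> \<open>Three-point inequality at the solution, with \<open>\<langle>F z, z - x\<^sup>*\<rangle> \<ge> 0\<close> dropped.\<close>
  have "inner (gam t *\<^sub>R (Fe t + lam t *\<^sub>R Dl)) (z - xs) + (norm (z - a))\<^sup>2 / 2
          \<le> bregman w gw a xs - bregman w gw z xs"
    using prox_point_three_point[OF a prox xs_in] bregman_ge_half_sq_dist[OF a z] by linarith
  moreover have "gam t * inner (F z) (z - xs) \<ge> 0" using xs_sol z ga by simp
  ultimately have "gam t * (inner (Fe (Suc t) - F z) (z - xs) - inner (Fe (Suc t) - Fe t) (z - xs)
                     + lam t * inner Dl (a - xs) + lam t * inner Dl (z - a)) + (norm (z - a))\<^sup>2 / 2
                   \<le> bregman w gw a xs - bregman w gw z xs"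
    by (simp add: inner_simps algebra_simps)
  from mult_left_mono[OF this th]
  have weighted: "\<theta> t * gam t * inner (Fe (Suc t) - F z) (z - xs) + \<theta> t * (norm (z - a))\<^sup>2 / 2
      \<le> \<theta> t * bregman w gw a xs - \<theta> t * bregman w gw z xs
        + \<theta> t * gam t * inner (Fe (Suc t) - Fe t) (z - xs)
        - (\<theta> t * gam t * lam t) * inner Dl (a - xs) - \<theta> t * gam t * lam t * inner Dl (z - a)"
    by (simp add: algebra_simps)
  show ?thesis
  proof (cases "t = 1")
    case True
    have "0 \<le> \<theta> t * (norm (z - a))\<^sup>2 / 4" using th by simp
    thus ?thesis using weighted True by (simp add: a_def z_def Dl_def)
  next
    case False
    hence t1: "t - 1 \<in> {1..k}" and tt: "t - 1 + 1 = t" using t by auto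
    have "\<theta> t * gam t * lam t = gam (t - 1) * \<theta> (t - 1)"
      using cond t1 tt by metis
    moreover have "- (\<theta> t * gam t * lam t * inner (Fe t - Fe (t - 1)) (z - a))
        \<le> \<theta> t * (norm (z - a))\<^sup>2 / 4 + \<theta> (t - 1) * (norm (a - xx (t - 1)))\<^sup>2 / 8
          + 4 * \<theta> t * (gam t)\<^sup>2 * (lam t)\<^sup>2
            * ((norm (Fe t - F a))\<^sup>2 + (norm (Fe (t - 1) - F (xx (t - 1))))\<^sup>2)"
      using cond t xin nonneg unfolding a_def
      by (intro extrapolation_cross_term_le) auto
    ultimately show ?thesis
      using weighted False unfolding a_def z_def Dl_def by (simp add: algebra_simps)
  qed
qed

lemma energy_last_term_le:
  fixes \<theta> \<gamma> :: real and a z Fa Fz :: 'a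
  assumes a: "a \<in> X" and z: "z \<in> X" and nonneg: "\<theta> \<ge> 0" "\<gamma> \<ge> 0"
    and last: "8 * L\<^sup>2 * \<gamma>\<^sup>2 \<le> 1"
  shows "\<theta> * \<gamma> * inner (Fz - Fa) (z - xs)
     \<le> \<theta> * bregman w gw z xs + \<theta> * (norm (z - a))\<^sup>2 / 8
       + 2 * \<theta> * \<gamma>\<^sup>2 * ((norm (Fz - F z))\<^sup>2 + (norm (Fa - F a))\<^sup>2)"
proof -
  define \<rho> dk e where "\<rho> = norm (z - xs)" and "dk = norm (z - a)"
    and "e = norm ((Fz - F z) - (Fa - F a))"
  have "Fz - Fa = (F z - F a) + ((Fz - F z) - (Fa - F a))" by (simp add: algebra_simps)
  hence "norm (Fz - Fa) \<le> norm (F z - F a) + e" unfolding e_def by (metis norm_triangle_ineq)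
  hence "norm (Fz - Fa) \<le> L * dk + e" using F_lipD[OF z a] unfolding dk_def by linarith
  hence "(norm (Fz - Fa))\<^sup>2 \<le> 2 * L\<^sup>2 * dk\<^sup>2 + 2 * e\<^sup>2"
    using add_sq_le[of "L * dk" e] power_mono[of "norm (Fz - Fa)" "L * dk + e" 2]
    by (simp add: power_mult_distrib)
  moreover have "8 * L\<^sup>2 * \<gamma>\<^sup>2 * dk\<^sup>2 \<le> dk\<^sup>2" using last by (intro mult_left_le_one_le) auto
  ultimately have "\<gamma>\<^sup>2 * (norm (Fz - Fa))\<^sup>2 / 2 \<le> dk\<^sup>2 / 8 + \<gamma>\<^sup>2 * e\<^sup>2"
    using mult_left_mono[of "(norm (Fz - Fa))\<^sup>2" "2 * L\<^sup>2 * dk\<^sup>2 + 2 * e\<^sup>2" "\<gamma>\<^sup>2"]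
    by (simp add: algebra_simps)
  moreover have "\<gamma>\<^sup>2 * e\<^sup>2 \<le> \<gamma>\<^sup>2 * (2 * (norm (Fz - F z))\<^sup>2 + 2 * (norm (Fa - F a))\<^sup>2)"
    unfolding e_def by (intro mult_left_mono norm_diff_sq_le) auto
  moreover have "\<gamma> * inner (Fz - Fa) (z - xs) \<le> \<gamma> * (norm (Fz - Fa) * \<rho>)"
    unfolding \<rho>_def using nonneg by (intro mult_left_mono order_trans[OF _ norm_cauchy_schwarz]) auto
  moreover have "2 * (\<gamma> * (norm (Fz - Fa) * \<rho>)) \<le> \<rho>\<^sup>2 + (\<gamma> * norm (Fz - Fa))\<^sup>2"
    using sum_squares_bound[of \<rho> "\<gamma> * norm (Fz - Fa)"] by (simp add: mult_ac)
  moreover have "\<rho>\<^sup>2 / 2 \<le> bregman w gw z xs"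
    using bregman_ge_half_sq_dist[OF z xs_in] unfolding \<rho>_def by (simp add: norm_minus_commute)
  ultimately have "\<gamma> * inner (Fz - Fa) (z - xs)
      \<le> bregman w gw z xs + dk\<^sup>2 / 8 + 2 * \<gamma>\<^sup>2 * ((norm (Fz - F z))\<^sup>2 + (norm (Fa - F a))\<^sup>2)"
    by (simp add: power_mult_distrib algebra_simps)
  from mult_left_mono[OF this nonneg(1)] show ?thesis
    unfolding dk_def by (simp add: algebra_simps)
qed

lemma energy_sum_le:
  fixes gam lam \<theta> :: "nat \<Rightarrow> real" and xx Fe :: "nat \<Rightarrow> 'a" and k :: nat
  assumes nonneg: "\<forall>t. gam t \<ge> 0 \<and> lam t \<ge> 0 \<and> \<theta> t \<ge> 0"
    and xin: "\<forall>t. xx t \<in> X"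
    and step: "\<forall>t\<in>{1..k}. is_prox_point (xx t)
                 (gam t *\<^sub>R (Fe t + lam t *\<^sub>R (Fe t - (if t = 1 then Fe 1 else Fe (t - 1)))))
                 (xx (Suc t))"
    and cond: "\<forall>t\<in>{1..k}. \<theta> (t + 1) * gam (t + 1) * lam (t + 1) = gam t * \<theta> t \<and>
                 \<theta> (t - 1) \<ge> 16 * L\<^sup>2 * (gam t)\<^sup>2 * (lam t)\<^sup>2 * \<theta> t \<and> \<theta> t \<le> \<theta> (t - 1)"
    and last: "8 * L\<^sup>2 * (gam k)\<^sup>2 \<le> 1"
  shows "(\<Sum>t=1..k. \<theta> t / 8 * (norm (xx (Suc t) - xx t))\<^sup>2)
       + (\<Sum>t=1..k. \<theta> t * gam t * inner (Fe (Suc t) - F (xx (Suc t))) (xx (Suc t) - xs))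
     \<le> \<theta> 1 * bregman w gw (xx 1) xs
       + (\<Sum>t=1..k. (if t = 1 then 0 else 4 * \<theta> t * (gam t)\<^sup>2 * (lam t)\<^sup>2 *
          ((norm (Fe t - F (xx t)))\<^sup>2 + (norm (Fe (t - 1) - F (xx (t - 1))))\<^sup>2)))
       + 2 * \<theta> k * (gam k)\<^sup>2 * ((norm (Fe (Suc k) - F (xx (Suc k))))\<^sup>2 + (norm (Fe k - F (xx k)))\<^sup>2)"
proof (cases "k = 0")
  case True
  thus ?thesis using nonneg bregman_nonneg[OF _ xs_in] xin by simp
next
  case False
  have "(\<Sum>t=1..k. \<theta> t * (norm (xx (Suc t) - xx t))\<^sup>2) / 8
        + (\<Sum>t=1..k. \<theta> t * gam t * inner (Fe (Suc t) - F (xx (Suc t))) (xx (Suc t) - xs))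
      \<le> \<theta> 1 * bregman w gw (xx 1) xs - \<theta> k * bregman w gw (xx (Suc k)) xs
        + \<theta> k * gam k * inner (Fe (Suc k) - Fe k) (xx (Suc k) - xs)
        - \<theta> k * (norm (xx (Suc k) - xx k))\<^sup>2 / 8
        + (\<Sum>t=1..k. (if t = 1 then 0 else 4 * \<theta> t * (gam t)\<^sup>2 * (lam t)\<^sup>2 *
            ((norm (Fe t - F (xx t)))\<^sup>2 + (norm (Fe (t - 1) - F (xx (t - 1))))\<^sup>2)))"
  proof (rule energy_telescope[where V = "\<lambda>t. bregman w gw (xx t) xs"])
    fix t assume t: "t \<in> {1..k}"
    have "t \<noteq> 1 \<Longrightarrow> Suc (t - 1) = t" using t by auto
    thus "\<theta> t * (norm (xx (Suc t) - xx t))\<^sup>2 / 2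
            + \<theta> t * gam t * inner (Fe (Suc t) - F (xx (Suc t))) (xx (Suc t) - xs)
          \<le> \<theta> t * bregman w gw (xx t) xs - \<theta> t * bregman w gw (xx (Suc t)) xs
            + \<theta> t * gam t * inner (Fe (Suc t) - Fe t) (xx (Suc t) - xs)
            - (if t = 1 then 0
               else \<theta> (t - 1) * gam (t - 1) * inner (Fe (Suc (t - 1)) - Fe (t - 1)) (xx (Suc (t - 1)) - xs))
            + \<theta> t * (norm (xx (Suc t) - xx t))\<^sup>2 / 4
            + (if t = 1 then 0 else \<theta> (t - 1) * (norm (xx (Suc (t - 1)) - xx (t - 1)))\<^sup>2 / 8)
            + (if t = 1 then 0 else 4 * \<theta> t * (gam t)\<^sup>2 * (lam t)\<^sup>2 *
                ((norm (Fe t - F (xx t)))\<^sup>2 + (norm (Fe (t - 1) - F (xx (t - 1))))\<^sup>2))"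
      using energy_step[OF nonneg xin step cond t] by (cases "t = 1") auto
  qed (use cond bregman_nonneg[OF _ xs_in] xin False in auto)
  moreover have "\<theta> k * gam k * inner (Fe (Suc k) - Fe k) (xx (Suc k) - xs)
     \<le> \<theta> k * bregman w gw (xx (Suc k)) xs + \<theta> k * (norm (xx (Suc k) - xx k))\<^sup>2 / 8
       + 2 * \<theta> k * (gam k)\<^sup>2 * ((norm (Fe (Suc k) - F (xx (Suc k))))\<^sup>2 + (norm (Fe k - F (xx k)))\<^sup>2)"
    using xin nonneg by (intro energy_last_term_le last) auto
  ultimately show ?thesis by (simp add: sum_divide_distrib[symmetric])
qed

end

section \<open>Expectations over the sample array\<close>

lemma (in prob_space) integral_le_of_pathwise_bound:
  fixes A S N :: "'a \<Rightarrow> real"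
  assumes A: "A \<in> borel_measurable M" and A_nn: "\<And>x. 0 \<le> A x"
    and S: "integrable M S" and S_zero: "(\<integral>x. S x \<partial>M) = 0" and N: "integrable M N"
    and bound: "\<And>x. A x + S x \<le> C + N x"
  shows "integrable M A" and "(\<integral>x. A x \<partial>M) \<le> C + (\<integral>x. N x \<partial>M)"
proof -
  have bound_int: "integrable M (\<lambda>x. C + N x - S x)"
    by (intro Bochner_Integration.integrable_diff Bochner_Integration.integrable_add integrable_const N S)
  have "norm (A x) \<le> norm (C + N x - S x)" for x
    using bound[of x] A_nn[of x] by simp
  thus A_int: "integrable M A"
    by (intro Bochner_Integration.integrable_bound[OF bound_int A]) simp
  have "(\<integral>x. A x \<partial>M) + (\<integral>x. S x \<partial>M) = (\<integral>x. A x + S x \<partial>M)"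
    by (rule Bochner_Integration.integral_add[OF A_int S, symmetric])
  also have "\<dots> \<le> (\<integral>x. C + N x \<partial>M)"
    using bound by (intro integral_mono Bochner_Integration.integrable_add A_int S N integrable_const)
  also have "\<dots> = C + (\<integral>x. N x \<partial>M)"
    using Bochner_Integration.integral_add[OF integrable_const N] by (simp add: prob_space)
  finally show "(\<integral>x. A x \<partial>M) \<le> C + (\<integral>x. N x \<partial>M)" using S_zero by simp
qed

context soe
begin

text \<open>The mini-batch of iteration \<open>t\<close> is independent of any \<open>\<psi>\<close> that only looks at the other
  samples, so by Fubini the batch can be integrated out first with \<open>\<psi>\<close> frozen.\<close>

lemma minibatch_noise_sq_at_le:
  fixes K :: "(nat \<times> nat) set" and \<psi> :: "(nat \<times> nat \<Rightarrow> 's) \<Rightarrow> 'a"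
  assumes fin: "finite K" and B: "{t} \<times> {..<m} \<subseteq> K"
    and \<psi>_meas: "\<psi> \<in> borel_measurable (PiM K (\<lambda>_. D))"
    and \<psi>_in: "\<And>\<xi>. \<psi> \<xi> \<in> X"
    and \<psi>_dep: "\<And>\<xi> \<xi>'. (\<forall>p\<in>K - {t} \<times> {..<m}. \<xi> p = \<xi>' p) \<Longrightarrow> \<psi> \<xi> = \<psi> \<xi>'"
  shows "(\<integral>\<^sup>+\<xi>. ennreal ((norm (minibatch m (\<psi> \<xi>) t \<xi> - F (\<psi> \<xi>)))\<^sup>2) \<partial>PiM K (\<lambda>_. D))
           \<le> ennreal (\<sigma>\<^sup>2 / real m)"
proof -
  interpret PP: product_prob_space "\<lambda>_::nat \<times> nat. D" by (rule product_prob_space_D)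
  define B' J where "B' = {t} \<times> {..<m}" and "J = K - {t} \<times> {..<m}"
  have KJ: "K = J \<union> B'" and JB: "J \<inter> B' = {}" and fJ: "finite J" and fB: "finite B'"
    using fin B unfolding J_def B'_def by auto
  have eqF: "F (\<psi> \<xi>) = F_ext (\<psi> \<xi>)" for \<xi> using F_ext_eq[OF \<psi>_in] by simp
  let ?f = "\<lambda>\<xi>. ennreal ((norm (minibatch m (\<psi> \<xi>) t \<xi> - F_ext (\<psi> \<xi>)))\<^sup>2)"
  have [measurable]: "(\<lambda>\<xi>. minibatch m (\<psi> \<xi>) t \<xi>) \<in> borel_measurable (PiM K (\<lambda>_. D))"
    by (rule minibatch_measurable[OF \<psi>_meas]) (use B in auto)
  have [measurable]: "(\<lambda>\<xi>. F_ext (\<psi> \<xi>)) \<in> borel_measurable (PiM K (\<lambda>_. D))"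
    using measurable_compose[OF \<psi>_meas F_ext_measurable] .
  have "?f \<in> borel_measurable (PiM (J \<union> B') (\<lambda>_. D))" unfolding KJ[symmetric] by measurable
  hence "(\<integral>\<^sup>+\<xi>. ?f \<xi> \<partial>PiM K (\<lambda>_. D))
           = (\<integral>\<^sup>+ x. (\<integral>\<^sup>+ y. ?f (merge J B' (x, y)) \<partial>PiM B' (\<lambda>_. D)) \<partial>PiM J (\<lambda>_. D))"
    unfolding KJ by (rule PP.product_nn_integral_fold[OF JB fJ fB])
  also have "\<dots> \<le> (\<integral>\<^sup>+ x. ennreal (\<sigma>\<^sup>2 / real m) \<partial>PiM J (\<lambda>_. D))"
  proof (rule nn_integral_mono)
    fix x
    have "\<psi> (merge J B' (x, y)) = \<psi> x" for y using JB by (intro \<psi>_dep) (auto simp: J_def)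
    moreover have "minibatch m z t (merge J B' (x, y)) = minibatch m z t y" for z y
      unfolding minibatch_def using JB B'_def by (intro arg_cong[where f="\<lambda>v. _ *\<^sub>R v"] sum.cong) auto
    ultimately have "(\<integral>\<^sup>+ y. ?f (merge J B' (x, y)) \<partial>PiM B' (\<lambda>_. D))
        = (\<integral>\<^sup>+ y. ennreal ((norm (minibatch m (\<psi> x) t y - F (\<psi> x)))\<^sup>2) \<partial>PiM B' (\<lambda>_. D))"
      using eqF by simp
    also have "\<dots> \<le> ennreal (\<sigma>\<^sup>2 / real m)"
      by (rule minibatch_noise_sq_le[OF \<psi>_in fB _ m_pos]) (simp add: B'_def)
    finally show "(\<integral>\<^sup>+ y. ?f (merge J B' (x, y)) \<partial>PiM B' (\<lambda>_. D)) \<le> ennreal (\<sigma>\<^sup>2 / real m)" .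
  qed
  also have "\<dots> = ennreal (\<sigma>\<^sup>2 / real m)"
    using prob_space.emeasure_space_1[OF prob_space_PiM_D, of J] by simp
  finally show ?thesis using eqF by simp
qed

abbreviation iter_noise_sq :: "(nat \<Rightarrow> real) \<Rightarrow> (nat \<Rightarrow> real) \<Rightarrow> nat \<Rightarrow> (nat \<times> nat \<Rightarrow> 's) \<Rightarrow> real"
  where "iter_noise_sq gam lam t \<xi> \<equiv> (norm (iter_est gam lam t \<xi> - F (soe_iter gam lam t \<xi>)))\<^sup>2"

lemma
  fixes K :: "(nat \<times> nat) set"
  assumes fin: "finite K" and sub: "{1..t} \<times> {..<m} \<subseteq> K" and t1: "t \<ge> 1"
  shows soe_iter_noise_sq_integrable: "integrable (PiM K (\<lambda>_. D)) (iter_noise_sq gam lam t)"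
    and soe_iter_noise_sq_integral_le:
      "(\<integral>\<xi>. iter_noise_sq gam lam t \<xi> \<partial>PiM K (\<lambda>_. D)) \<le> \<sigma>\<^sup>2 / real m"
proof -
  have sub': "{1..<t} \<times> {..<m} \<subseteq> K - {t} \<times> {..<m}" and B: "{t} \<times> {..<m} \<subseteq> K"
    using sub t1 by auto
  have [measurable]: "soe_iter gam lam t \<in> borel_measurable (PiM K (\<lambda>_. D))"
    by (rule soe_iter_measurable) (use sub in auto)
  have nn: "(\<integral>\<^sup>+\<xi>. ennreal ((norm (iter_est gam lam t \<xi> - F (soe_iter gam lam t \<xi>)))\<^sup>2)
               \<partial>PiM K (\<lambda>_. D)) \<le> ennreal (\<sigma>\<^sup>2 / real m)"
    by (intro minibatch_noise_sq_at_le[OF fin B] soe_iter_in soe_iter_depends)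
       (use sub' in auto)
  have [measurable]: "(\<lambda>\<xi>. iter_est gam lam t \<xi>) \<in> borel_measurable (PiM K (\<lambda>_. D))"
    by (rule minibatch_measurable) (use B in auto)
  have "(\<lambda>\<xi>. (norm (iter_est gam lam t \<xi> - F_ext (soe_iter gam lam t \<xi>)))\<^sup>2)
          \<in> borel_measurable (PiM K (\<lambda>_. D))" by measurable
  hence m: "(\<lambda>\<xi>. (norm (iter_est gam lam t \<xi> - F (soe_iter gam lam t \<xi>)))\<^sup>2)
              \<in> borel_measurable (PiM K (\<lambda>_. D))"
    by (simp add: F_ext_eq soe_iter_in)
  show i: "integrable (PiM K (\<lambda>_. D)) (iter_noise_sq gam lam t)"
    by (rule integrableI_nonneg[OF m]) (auto intro: order.strict_trans1[OF nn])
  show "(\<integral>\<xi>. iter_noise_sq gam lam t \<xi> \<partial>PiM K (\<lambda>_. D)) \<le> \<sigma>\<^sup>2 / real m"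
    using nn nn_integral_eq_integral[OF i] by (simp add: ennreal_le_iff)
qed

lemma minibatch_noise_norm_le:
  fixes K :: "(nat \<times> nat) set"
  assumes z: "z \<in> X" and fin: "finite K" and B: "{t} \<times> {..<m} \<subseteq> K"
  shows "(\<integral>\<^sup>+ y. ennreal (norm (minibatch m z t y - F z)) \<partial>PiM K (\<lambda>_. D)) \<le> ennreal (1 + \<sigma>\<^sup>2 / real m)"
proof -
  interpret Q: prob_space "PiM K (\<lambda>_. D)" by (rule prob_space_PiM_D)
  have [measurable]: "minibatch m z t \<in> borel_measurable (PiM K (\<lambda>_. D))"
    using minibatch_measurable[of "\<lambda>_. z" K m t] B by auto
  have "(\<integral>\<^sup>+ y. ennreal (norm (minibatch m z t y - F z)) \<partial>PiM K (\<lambda>_. D))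
          \<le> (\<integral>\<^sup>+ y. 1 + ennreal ((norm (minibatch m z t y - F z))\<^sup>2) \<partial>PiM K (\<lambda>_. D))"
  proof (rule nn_integral_mono)
    fix y
    have "2 * norm (minibatch m z t y - F z) \<le> 1 + (norm (minibatch m z t y - F z))\<^sup>2"
      using sum_squares_bound[of 1 "norm (minibatch m z t y - F z)"] by simp
    hence "norm (minibatch m z t y - F z) \<le> 1 + (norm (minibatch m z t y - F z))\<^sup>2"
      using zero_le_power2[of "norm (minibatch m z t y - F z)"] by linarith
    thus "ennreal (norm (minibatch m z t y - F z)) \<le> 1 + ennreal ((norm (minibatch m z t y - F z))\<^sup>2)"
      by (metis ennreal_leI ennreal_plus ennreal_1 zero_le_one zero_le_power2)
  qed
  also have "\<dots> = 1 + (\<integral>\<^sup>+ y. ennreal ((norm (minibatch m z t y - F z))\<^sup>2) \<partial>PiM K (\<lambda>_. D))"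
    by (subst nn_integral_add) (auto simp: Q.emeasure_space_1)
  also have "\<dots> \<le> 1 + ennreal (\<sigma>\<^sup>2 / real m)"
    using minibatch_noise_sq_le[OF z fin B m_pos] by (rule add_left_mono)
  finally show ?thesis by (simp add: ennreal_plus)
qed

lemma
  fixes K :: "(nat \<times> nat) set" and \<psi> :: "(nat \<times> nat \<Rightarrow> 's) \<Rightarrow> 'a"
  assumes fin: "finite K" and B: "{t} \<times> {..<m} \<subseteq> K"
    and \<psi>_meas: "\<psi> \<in> borel_measurable (PiM K (\<lambda>_. D))"
    and \<psi>_meas': "\<psi> \<in> borel_measurable (PiM (K - {t} \<times> {..<m}) (\<lambda>_. D))"
    and \<psi>_in: "\<And>\<xi>. \<psi> \<xi> \<in> X"
    and \<psi>_dep: "\<And>\<xi> \<xi>'. (\<forall>p\<in>K - {t} \<times> {..<m}. \<xi> p = \<xi>' p) \<Longrightarrow> \<psi> \<xi> = \<psi> \<xi>'"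
    and \<psi>_moment: "(\<integral>\<^sup>+ x. ennreal (norm (\<psi> x - xs)) \<partial>PiM (K - {t} \<times> {..<m}) (\<lambda>_. D)) < \<infinity>"
  shows minibatch_noise_inner_at_integrable:
      "integrable (PiM K (\<lambda>_. D)) (\<lambda>\<xi>. inner (minibatch m (\<psi> \<xi>) t \<xi> - F (\<psi> \<xi>)) (\<psi> \<xi> - xs))"
    and minibatch_noise_inner_at_integral_zero:
      "(\<integral>\<xi>. inner (minibatch m (\<psi> \<xi>) t \<xi> - F (\<psi> \<xi>)) (\<psi> \<xi> - xs) \<partial>PiM K (\<lambda>_. D)) = 0"
proof -
  interpret PP: product_prob_space "\<lambda>_::nat \<times> nat. D" by (rule product_prob_space_D)
  define B' J where "B' = {t} \<times> {..<m}" and "J = K - {t} \<times> {..<m}"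
  have KJ: "K = J \<union> B'" and JB: "J \<inter> B' = {}" and fJ: "finite J" and fB: "finite B'"
    using fin B unfolding J_def B'_def by auto
  have eqF: "F (\<psi> \<xi>) = F_ext (\<psi> \<xi>)" for \<xi> using F_ext_eq[OF \<psi>_in] by simp
  have [measurable]: "(\<lambda>\<xi>. minibatch m (\<psi> \<xi>) t \<xi>) \<in> borel_measurable (PiM K (\<lambda>_. D))"
    by (rule minibatch_measurable[OF \<psi>_meas]) (use B in auto)
  have [measurable]: "(\<lambda>\<xi>. F_ext (\<psi> \<xi>)) \<in> borel_measurable (PiM K (\<lambda>_. D))"
    using measurable_compose[OF \<psi>_meas F_ext_measurable] .
  have \<psi>_moment_meas: "(\<lambda>x. ennreal (norm (\<psi> x - xs))) \<in> borel_measurable (PiM J (\<lambda>_. D))"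
  proof -
    note [measurable] = \<psi>_meas'
    show ?thesis unfolding J_def by measurable
  qed
  note [measurable] = \<psi>_meas
  let ?h = "\<lambda>\<xi>. inner (minibatch m (\<psi> \<xi>) t \<xi> - F_ext (\<psi> \<xi>)) (\<psi> \<xi> - xs)"
  let ?g = "\<lambda>\<xi>. ennreal (norm (minibatch m (\<psi> \<xi>) t \<xi> - F_ext (\<psi> \<xi>)) * norm (\<psi> \<xi> - xs))"
  have merge_\<psi>: "\<psi> (merge J B' (x, y)) = \<psi> x" for x y
    using JB by (intro \<psi>_dep) (auto simp: J_def)
  have merge_minibatch: "minibatch m z t (merge J B' (x, y)) = minibatch m z t y" for z x y
    unfolding minibatch_def using JB B'_def by (intro arg_cong[where f="\<lambda>v. _ *\<^sub>R v"] sum.cong) auto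
  have "(\<integral>\<^sup>+ \<xi>. ennreal (norm (?h \<xi>)) \<partial>PiM K (\<lambda>_. D)) \<le> (\<integral>\<^sup>+ \<xi>. ?g \<xi> \<partial>PiM K (\<lambda>_. D))"
    by (intro nn_integral_mono ennreal_leI) (simp add: Cauchy_Schwarz_ineq2)
  also have "\<dots> = (\<integral>\<^sup>+ x. (\<integral>\<^sup>+ y. ?g (merge J B' (x, y)) \<partial>PiM B' (\<lambda>_. D)) \<partial>PiM J (\<lambda>_. D))"
  proof -
    have "?g \<in> borel_measurable (PiM (J \<union> B') (\<lambda>_. D))" unfolding KJ[symmetric] by measurable
    thus ?thesis unfolding KJ by (rule PP.product_nn_integral_fold[OF JB fJ fB])
  qed
  also have "\<dots> \<le> (\<integral>\<^sup>+ x. ennreal (norm (\<psi> x - xs)) * ennreal (1 + \<sigma>\<^sup>2 / real m) \<partial>PiM J (\<lambda>_. D))"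
  proof (rule nn_integral_mono)
    fix x
    have [measurable]: "minibatch m (\<psi> x) t \<in> borel_measurable (PiM B' (\<lambda>_. D))"
      using minibatch_measurable[of "\<lambda>_. \<psi> x" B' m t] by (auto simp: B'_def)
    have "(\<integral>\<^sup>+ y. ?g (merge J B' (x, y)) \<partial>PiM B' (\<lambda>_. D))
       = (\<integral>\<^sup>+ y. ennreal (norm (minibatch m (\<psi> x) t y - F (\<psi> x))) \<partial>PiM B' (\<lambda>_. D))
           * ennreal (norm (\<psi> x - xs))"
      unfolding merge_\<psi> merge_minibatch eqF[symmetric] ennreal_mult'[OF norm_ge_zero]
      by (rule nn_integral_multc) measurable
    also have "\<dots> \<le> ennreal (1 + \<sigma>\<^sup>2 / real m) * ennreal (norm (\<psi> x - xs))"
      by (intro mult_right_mono minibatch_noise_norm_le \<psi>_in fB) (auto simp: B'_def)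
    finally show "(\<integral>\<^sup>+ y. ?g (merge J B' (x, y)) \<partial>PiM B' (\<lambda>_. D))
                    \<le> ennreal (norm (\<psi> x - xs)) * ennreal (1 + \<sigma>\<^sup>2 / real m)"
      by (simp add: mult.commute)
  qed
  also have "\<dots> = (\<integral>\<^sup>+ x. ennreal (norm (\<psi> x - xs)) \<partial>PiM J (\<lambda>_. D)) * ennreal (1 + \<sigma>\<^sup>2 / real m)"
    by (rule nn_integral_multc[OF \<psi>_moment_meas])
  also have "\<dots> < \<infinity>" using \<psi>_moment unfolding J_def by (simp add: ennreal_mult_less_top)
  finally have ih: "integrable (PiM K (\<lambda>_. D)) ?h"
    by (intro integrableI_bounded) measurable
  thus "integrable (PiM K (\<lambda>_. D)) (\<lambda>\<xi>. inner (minibatch m (\<psi> \<xi>) t \<xi> - F (\<psi> \<xi>)) (\<psi> \<xi> - xs))"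
    using eqF by simp
  have "(\<integral>\<xi>. ?h \<xi> \<partial>PiM K (\<lambda>_. D)) = (\<integral>x. (\<integral>y. ?h (merge J B' (x, y)) \<partial>PiM B' (\<lambda>_. D)) \<partial>PiM J (\<lambda>_. D))"
    using ih unfolding KJ by (intro PP.product_integral_fold[OF JB fJ fB]) simp
  also have "\<dots> = (\<integral>x. 0 \<partial>PiM J (\<lambda>_. D))"
  proof (rule Bochner_Integration.integral_cong[OF refl])
    fix x
    have "(\<integral>y. ?h (merge J B' (x, y)) \<partial>PiM B' (\<lambda>_. D))
        = inner (\<integral>y. minibatch m (\<psi> x) t y - F (\<psi> x) \<partial>PiM B' (\<lambda>_. D)) (\<psi> x - xs)"
      unfolding merge_\<psi> merge_minibatch eqF[symmetric]
      by (rule integral_inner_left) (rule minibatch_noise_integrable[OF \<psi>_in _ m_pos], simp add: B'_def)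
    thus "(\<integral>y. ?h (merge J B' (x, y)) \<partial>PiM B' (\<lambda>_. D)) = 0"
      using minibatch_noise_integral_zero[OF \<psi>_in _ m_pos, of t B'] by (simp add: B'_def)
  qed
  finally show "(\<integral>\<xi>. inner (minibatch m (\<psi> \<xi>) t \<xi> - F (\<psi> \<xi>)) (\<psi> \<xi> - xs) \<partial>PiM K (\<lambda>_. D)) = 0"
    using eqF by simp
qed

lemma norm_estimate_le:
  assumes a: "a \<in> X"
  shows "norm e \<le> 1 + norm (F xs) + L * norm (a - xs) + (norm (e - F a))\<^sup>2"
proof -
  have "norm e \<le> norm (e - F a) + norm (F a)" using norm_triangle_ineq[of "e - F a" "F a"] by simp
  moreover have "norm (F a) \<le> norm (F xs) + L * norm (a - xs)"
    using norm_triangle_ineq[of "F xs" "F a - F xs"] F_lipD[OF a xs_in] by simp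
  moreover have "2 * norm (e - F a) \<le> 1 + (norm (e - F a))\<^sup>2"
    using sum_squares_bound[of 1 "norm (e - F a)"] by simp
  ultimately show ?thesis using zero_le_power2[of "norm (e - F a)"] by linarith
qed

lemma iter_est_norm_integrable:
  fixes K :: "(nat \<times> nat) set"
  assumes fin: "finite K" and sub: "{1..t} \<times> {..<m} \<subseteq> K" and t1: "t \<ge> 1"
    and dist: "integrable (PiM K (\<lambda>_. D)) (\<lambda>\<xi>. norm (soe_iter gam lam t \<xi> - xs))"
  shows "integrable (PiM K (\<lambda>_. D)) (\<lambda>\<xi>. norm (iter_est gam lam t \<xi>))"
proof (rule Bochner_Integration.integrable_bound)
  interpret Q: prob_space "PiM K (\<lambda>_. D)" by (rule prob_space_PiM_D)
  show "integrable (PiM K (\<lambda>_. D)) (\<lambda>\<xi>. 1 + norm (F xs) + L * norm (soe_iter gam lam t \<xi> - xs)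
          + (norm (iter_est gam lam t \<xi> - F (soe_iter gam lam t \<xi>)))\<^sup>2)"
    using dist soe_iter_noise_sq_integrable[OF fin sub t1, where gam = gam and lam = lam] by auto
  have "soe_iter gam lam t \<in> borel_measurable (PiM K (\<lambda>_. D))"
    by (rule soe_iter_measurable) (use sub in auto)
  hence [measurable]: "(\<lambda>\<xi>. iter_est gam lam t \<xi>) \<in> borel_measurable (PiM K (\<lambda>_. D))"
    using sub t1 by (intro minibatch_measurable) auto
  show "(\<lambda>\<xi>. norm (iter_est gam lam t \<xi>)) \<in> borel_measurable (PiM K (\<lambda>_. D))"
    by measurable
  show "AE \<xi> in PiM K (\<lambda>_. D). norm (norm (iter_est gam lam t \<xi>))
          \<le> norm (1 + norm (F xs) + L * norm (soe_iter gam lam t \<xi> - xs)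
                  + (norm (iter_est gam lam t \<xi> - F (soe_iter gam lam t \<xi>)))\<^sup>2)"
    using norm_estimate_le[OF soe_iter_in] L_pos by (intro AE_I2) simp
qed

lemma soe_iter_dist_integrable:
  fixes K :: "(nat \<times> nat) set"
  assumes fin: "finite K"
  shows "{1..<t} \<times> {..<m} \<subseteq> K \<Longrightarrow> integrable (PiM K (\<lambda>_. D)) (\<lambda>\<xi>. norm (soe_iter gam lam t \<xi> - xs))"
proof (induction t rule: less_induct)
  case (less t)
  interpret Q: prob_space "PiM K (\<lambda>_. D)" by (rule prob_space_PiM_D)
  have "t \<le> 1 \<or> (\<exists>s. t = Suc (Suc s))" by presburger
  then consider "t \<le> 1" | s where "t = Suc (Suc s)" by blast
  then show ?case
  proof cases
    case 1 thus ?thesis by (simp add: soe_iter_start)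
  next
    case (2 s)
    let ?a = "soe_iter gam lam (Suc s)" and ?Ft = "iter_est gam lam (Suc s)"
    let ?Fp = "\<lambda>\<xi>. if s = 0 then ?Ft \<xi> else iter_est gam lam s \<xi>"
    let ?c = "\<bar>gam (Suc s)\<bar>" and ?l = "\<bar>lam (Suc s)\<bar>"
    have sub: "{1..<Suc s} \<times> {..<m} \<subseteq> K" using less.prems 2 by auto
    hence dist_a: "integrable (PiM K (\<lambda>_. D)) (\<lambda>\<xi>. norm (?a \<xi> - xs))"
      using less.IH[of "Suc s"] 2 by auto
    have Ft: "integrable (PiM K (\<lambda>_. D)) (\<lambda>\<xi>. norm (?Ft \<xi>))"
      using less.prems 2 by (intro iter_est_norm_integrable[OF fin _ _ dist_a]) auto
    have Fp: "integrable (PiM K (\<lambda>_. D)) (\<lambda>\<xi>. norm (?Fp \<xi>))"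
    proof (cases "s = 0")
      case False
      have "{1..<s} \<times> {..<m} \<subseteq> K" using sub by auto
      hence "integrable (PiM K (\<lambda>_. D)) (\<lambda>\<xi>. norm (soe_iter gam lam s \<xi> - xs))"
        using less.IH[of s] 2 by auto
      hence "integrable (PiM K (\<lambda>_. D)) (\<lambda>\<xi>. norm (iter_est gam lam s \<xi>))"
        using less.prems 2 False by (intro iter_est_norm_integrable[OF fin]) auto
      thus ?thesis using False by simp
    qed (use Ft in simp)
    let ?B = "\<lambda>\<xi>. norm (?a \<xi> - xs) + 2 * (?c * ((1 + ?l) * norm (?Ft \<xi>) + ?l * norm (?Fp \<xi>)))"
    have bound: "norm (soe_iter gam lam t \<xi> - xs) \<le> ?B \<xi>" for \<xi>
    proof -
      let ?v = "gam (Suc s) *\<^sub>R (?Ft \<xi> + lam (Suc s) *\<^sub>R (?Ft \<xi> - ?Fp \<xi>))"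
      have "soe_iter gam lam t \<xi> = prox (?a \<xi>) ?v"
        using 2 prox_ext_eq[OF soe_iter_in] by (simp add: Let_def)
      moreover have "norm (prox (?a \<xi>) ?v - ?a \<xi>) \<le> 2 * norm ?v"
        by (rule prox_dist_le[OF soe_iter_in])
      ultimately have "norm (soe_iter gam lam t \<xi> - ?a \<xi>) \<le> 2 * norm ?v"
        by metis
      moreover have "norm ?v \<le> ?c * ((1 + ?l) * norm (?Ft \<xi>) + ?l * norm (?Fp \<xi>))"
        by (rule norm_extrapolation_le)
      ultimately show ?thesis
        using norm_triangle_ineq[of "soe_iter gam lam t \<xi> - ?a \<xi>" "?a \<xi> - xs"] by simp
    qed
    show ?thesis
    proof (rule Bochner_Integration.integrable_bound[OF _ _ AE_I2])
      show "integrable (PiM K (\<lambda>_. D)) ?B" using dist_a Ft Fp by auto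
      show "(\<lambda>\<xi>. norm (soe_iter gam lam t \<xi> - xs)) \<in> borel_measurable (PiM K (\<lambda>_. D))"
        using soe_iter_measurable[OF less.prems] by measurable
      fix \<xi>
      show "norm (norm (soe_iter gam lam t \<xi> - xs)) \<le> norm (?B \<xi>)"
        using bound[of \<xi>] abs_ge_self[of "?B \<xi>"] by simp
    qed
  qed
qed

lemma
  fixes K :: "(nat \<times> nat) set"
  assumes fin: "finite K" and sub: "{1..Suc t} \<times> {..<m} \<subseteq> K"
  shows soe_iter_noise_inner_integrable: "integrable (PiM K (\<lambda>_. D))
      (\<lambda>\<xi>. inner (iter_est gam lam (Suc t) \<xi> - F (soe_iter gam lam (Suc t) \<xi>)) (soe_iter gam lam (Suc t) \<xi> - xs))"
    and soe_iter_noise_inner_integral_zero: "(\<integral>\<xi>.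
      inner (iter_est gam lam (Suc t) \<xi> - F (soe_iter gam lam (Suc t) \<xi>)) (soe_iter gam lam (Suc t) \<xi> - xs)
      \<partial>PiM K (\<lambda>_. D)) = 0"
proof -
  have sub': "{1..<Suc t} \<times> {..<m} \<subseteq> K - {Suc t} \<times> {..<m}" and B: "{Suc t} \<times> {..<m} \<subseteq> K"
    using sub by auto
  have "integrable (PiM (K - {Suc t} \<times> {..<m}) (\<lambda>_. D)) (\<lambda>\<xi>. norm (soe_iter gam lam (Suc t) \<xi> - xs))"
    by (rule soe_iter_dist_integrable[OF _ sub']) (use fin in auto)
  hence "(\<integral>\<^sup>+ x. ennreal (norm (soe_iter gam lam (Suc t) x - xs)) \<partial>PiM (K - {Suc t} \<times> {..<m}) (\<lambda>_. D)) < \<infinity>"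
    using integrableD(2) by (simp add: top.not_eq_extremum)
  note moment = this
  have s0: "{1..<Suc t} \<times> {..<m} \<subseteq> K" using sub by auto
  have dep: "soe_iter gam lam (Suc t) \<xi> = soe_iter gam lam (Suc t) \<xi>'"
    if "\<forall>p\<in>K - {Suc t} \<times> {..<m}. \<xi> p = \<xi>' p" for \<xi> \<xi>'
    using that sub' by (intro soe_iter_depends) auto
  note inner_at = fin B soe_iter_measurable[OF s0] soe_iter_measurable[OF sub'] soe_iter_in dep moment
  show "integrable (PiM K (\<lambda>_. D)) (\<lambda>\<xi>.
      inner (iter_est gam lam (Suc t) \<xi> - F (soe_iter gam lam (Suc t) \<xi>)) (soe_iter gam lam (Suc t) \<xi> - xs))"
    by (rule minibatch_noise_inner_at_integrable[OF inner_at])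
  show "(\<integral>\<xi>. inner (iter_est gam lam (Suc t) \<xi> - F (soe_iter gam lam (Suc t) \<xi>))
                 (soe_iter gam lam (Suc t) \<xi> - xs) \<partial>PiM K (\<lambda>_. D)) = 0"
    by (rule minibatch_noise_inner_at_integral_zero[OF inner_at])
qed

lemma
  fixes gam lam \<theta> :: "nat \<Rightarrow> real" and k :: nat
  assumes nonneg: "\<forall>t. gam t \<ge> 0 \<and> lam t \<ge> 0 \<and> \<theta> t \<ge> 0" and k: "k \<ge> 1"
  defines "N \<equiv> \<lambda>\<xi>. (\<Sum>t=1..k. if t = 1 then 0 else 4 * \<theta> t * (gam t)\<^sup>2 * (lam t)\<^sup>2
                        * (iter_noise_sq gam lam t \<xi> + iter_noise_sq gam lam (t - 1) \<xi>))
                  + 2 * \<theta> k * (gam k)\<^sup>2 * (iter_noise_sq gam lam (Suc k) \<xi> + iter_noise_sq gam lam k \<xi>)"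
  shows noise_terms_integrable: "integrable (PiM ({1..Suc k} \<times> {..<m}) (\<lambda>_. D)) N"
    and noise_terms_integral_le: "(\<integral>\<xi>. N \<xi> \<partial>PiM ({1..Suc k} \<times> {..<m}) (\<lambda>_. D))
          \<le> (\<Sum>t = 1..k. 8 * \<theta> t * (gam t)\<^sup>2 * (lam t)\<^sup>2 * (\<sigma>\<^sup>2 / real m))
            + 4 * \<theta> k * (gam k)\<^sup>2 * (\<sigma>\<^sup>2 / real m)"
proof -
  let ?P = "PiM ({1..Suc k} \<times> {..<m}) (\<lambda>_. D)"
  have ds_int: "integrable ?P (iter_noise_sq gam lam t)"
    and ds_le: "(\<integral>\<xi>. iter_noise_sq gam lam t \<xi> \<partial>?P) \<le> \<sigma>\<^sup>2 / real m" if "t \<in> {1..Suc k}" for t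
  proof -
    have "{1..t} \<times> {..<m} \<subseteq> {1..Suc k} \<times> {..<m}" "t \<ge> 1" using that by auto
    thus "integrable ?P (iter_noise_sq gam lam t)"
      "(\<integral>\<xi>. iter_noise_sq gam lam t \<xi> \<partial>?P) \<le> \<sigma>\<^sup>2 / real m"
      by (intro soe_iter_noise_sq_integrable soe_iter_noise_sq_integral_le finite_SigmaI; simp)+
  qed
  define NN where "NN = (\<lambda>t \<xi>. if t = 1 then 0 else 4 * \<theta> t * (gam t)\<^sup>2 * (lam t)\<^sup>2
                     * (iter_noise_sq gam lam t \<xi> + iter_noise_sq gam lam (t - 1) \<xi>))"
  have NN_int: "integrable ?P (NN t)" if t: "t \<in> {1..k}" for t
  proof (cases "t = 1")
    case False
    hence "t \<in> {1..Suc k}" "t - 1 \<in> {1..Suc k}" using t by auto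
    from ds_int[OF this(1)] ds_int[OF this(2)] show ?thesis using False unfolding NN_def by simp
  qed (simp add: NN_def)
  have NN_le: "(\<integral>\<xi>. NN t \<xi> \<partial>?P) \<le> 8 * \<theta> t * (gam t)\<^sup>2 * (lam t)\<^sup>2 * (\<sigma>\<^sup>2 / real m)"
    if t: "t \<in> {1..k}" for t
  proof (cases "t = 1")
    case True
    thus ?thesis unfolding NN_def using nonneg by simp
  next
    case False
    hence t': "t \<in> {1..Suc k}" "t - 1 \<in> {1..Suc k}" using t by auto
    have "(\<integral>\<xi>. NN t \<xi> \<partial>?P) = 4 * \<theta> t * (gam t)\<^sup>2 * (lam t)\<^sup>2
            * ((\<integral>\<xi>. iter_noise_sq gam lam t \<xi> \<partial>?P) + (\<integral>\<xi>. iter_noise_sq gam lam (t - 1) \<xi> \<partial>?P))"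
      unfolding NN_def using False ds_int[OF t'(1)] ds_int[OF t'(2)] by simp
    also have "\<dots> \<le> 4 * \<theta> t * (gam t)\<^sup>2 * (lam t)\<^sup>2 * (\<sigma>\<^sup>2 / real m + \<sigma>\<^sup>2 / real m)"
      using ds_le[OF t'(1)] ds_le[OF t'(2)] nonneg by (intro mult_left_mono add_mono) auto
    finally show ?thesis by simp
  qed
  have N_eq: "N = (\<lambda>\<xi>. (\<Sum>t=1..k. NN t \<xi>)
                  + 2 * \<theta> k * (gam k)\<^sup>2 * (iter_noise_sq gam lam (Suc k) \<xi> + iter_noise_sq gam lam k \<xi>))"
    unfolding N_def NN_def ..
  have k': "Suc k \<in> {1..Suc k}" "k \<in> {1..Suc k}" using k by auto
  show "integrable ?P N" unfolding N_eq
    by (intro Bochner_Integration.integrable_add Bochner_Integration.integrable_sum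
          Bochner_Integration.integrable_mult_right NN_int ds_int k')
  have "(\<integral>\<xi>. N \<xi> \<partial>?P) = (\<Sum>t=1..k. (\<integral>\<xi>. NN t \<xi> \<partial>?P))
      + 2 * \<theta> k * (gam k)\<^sup>2 * ((\<integral>\<xi>. iter_noise_sq gam lam (Suc k) \<xi> \<partial>?P) + (\<integral>\<xi>. iter_noise_sq gam lam k \<xi> \<partial>?P))"
    unfolding N_eq using NN_int ds_int[OF k'(1)] ds_int[OF k'(2)]
    by (subst Bochner_Integration.integral_add)
       (auto intro!: Bochner_Integration.integrable_sum Bochner_Integration.integrable_mult_right
          Bochner_Integration.integrable_add simp: Bochner_Integration.integral_sum)
  also have "\<dots> \<le> (\<Sum>t = 1..k. 8 * \<theta> t * (gam t)\<^sup>2 * (lam t)\<^sup>2 * (\<sigma>\<^sup>2 / real m))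
                 + 2 * \<theta> k * (gam k)\<^sup>2 * (\<sigma>\<^sup>2 / real m + \<sigma>\<^sup>2 / real m)"
    using ds_le[OF k'(1)] ds_le[OF k'(2)] nonneg
    by (intro add_mono sum_mono NN_le mult_left_mono) auto
  finally show "(\<integral>\<xi>. N \<xi> \<partial>?P) \<le> (\<Sum>t = 1..k. 8 * \<theta> t * (gam t)\<^sup>2 * (lam t)\<^sup>2 * (\<sigma>\<^sup>2 / real m))
            + 4 * \<theta> k * (gam k)\<^sup>2 * (\<sigma>\<^sup>2 / real m)"
    by simp
qed

lemma expected_energy_le:
  fixes gam lam \<theta> :: "nat \<Rightarrow> real" and k :: nat
  assumes nonneg: "\<forall>t. gam t \<ge> 0 \<and> lam t \<ge> 0 \<and> \<theta> t \<ge> 0"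
    and cond: "\<forall>t\<in>{1..k}. \<theta> (t + 1) * gam (t + 1) * lam (t + 1) = gam t * \<theta> t \<and>
                 \<theta> (t - 1) \<ge> 16 * L\<^sup>2 * (gam t)\<^sup>2 * (lam t)\<^sup>2 * \<theta> t \<and> \<theta> t \<le> \<theta> (t - 1)"
    and last: "8 * L\<^sup>2 * (gam k)\<^sup>2 \<le> 1"
  shows "(\<Sum>t = 1..k. ennreal (\<theta> t / 8) * (\<integral>\<^sup>+ \<xi>. ennreal ((norm (soe_iter gam lam (t + 1) \<xi>
            - soe_iter gam lam t \<xi>))\<^sup>2) \<partial>PiM ({1..Suc k} \<times> {..<m}) (\<lambda>_. D)))
        \<le> ennreal (\<theta> 1 * bregman w gw x1 xs
                   + (\<Sum>t = 1..k. 8 * \<theta> t * (gam t)\<^sup>2 * (lam t)\<^sup>2 * (\<sigma>\<^sup>2 / real m))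
                   + 4 * \<theta> k * (gam k)\<^sup>2 * (\<sigma>\<^sup>2 / real m))"
proof (cases "k = 0")
  case True thus ?thesis by simp
next
  case False
  let ?P = "PiM ({1..Suc k} \<times> {..<m}) (\<lambda>_. D)"
  interpret Q: prob_space ?P by (rule prob_space_PiM_D)
  define dsq where "dsq t \<xi> = (norm (soe_iter gam lam (Suc t) \<xi> - soe_iter gam lam t \<xi>))\<^sup>2" for t \<xi>
  define A where "A \<xi> = (\<Sum>t=1..k. \<theta> t / 8 * dsq t \<xi>)" for \<xi>
  define I where "I t \<xi> = inner (iter_est gam lam (Suc t) \<xi> - F (soe_iter gam lam (Suc t) \<xi>))
                             (soe_iter gam lam (Suc t) \<xi> - xs)" for t \<xi>
  define S where "S \<xi> = (\<Sum>t=1..k. \<theta> t * gam t * I t \<xi>)" for \<xi>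
  define N where "N = (\<lambda>\<xi>. (\<Sum>t=1..k. if t = 1 then 0 else 4 * \<theta> t * (gam t)\<^sup>2 * (lam t)\<^sup>2
                        * (iter_noise_sq gam lam t \<xi> + iter_noise_sq gam lam (t - 1) \<xi>))
                  + 2 * \<theta> k * (gam k)\<^sup>2 * (iter_noise_sq gam lam (Suc k) \<xi> + iter_noise_sq gam lam k \<xi>))"
  define C where "C = \<theta> 1 * bregman w gw x1 xs"
  have pathwise: "A \<xi> + S \<xi> \<le> C + N \<xi>" for \<xi>
    using energy_sum_le[OF nonneg _ _ cond last, of "\<lambda>t. soe_iter gam lam t \<xi>" "\<lambda>t. iter_est gam lam t \<xi>"]
      soe_iter_in soe_iter_is_prox_point
    unfolding A_def S_def I_def C_def N_def dsq_def by (simp add: soe_iter_start)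
  have I_int: "integrable ?P (I t)" and I_zero: "(\<integral>\<xi>. I t \<xi> \<partial>?P) = 0" if "t \<in> {1..k}" for t
    unfolding I_def using that
    by (intro soe_iter_noise_inner_integrable soe_iter_noise_inner_integral_zero; auto)+
  have S_int: "integrable ?P S" and S_zero: "(\<integral>\<xi>. S \<xi> \<partial>?P) = 0"
    unfolding S_def using I_int I_zero by (auto simp: Bochner_Integration.integral_sum)
  have N_int: "integrable ?P N" and N_le: "(\<integral>\<xi>. N \<xi> \<partial>?P)
      \<le> (\<Sum>t = 1..k. 8 * \<theta> t * (gam t)\<^sup>2 * (lam t)\<^sup>2 * (\<sigma>\<^sup>2 / real m)) + 4 * \<theta> k * (gam k)\<^sup>2 * (\<sigma>\<^sup>2 / real m)"
    unfolding N_def using noise_terms_integrable noise_terms_integral_le nonneg False by auto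
  have dsq_meas: "dsq t \<in> borel_measurable ?P" if "t \<le> k" for t
  proof -
    have "soe_iter gam lam (Suc t) \<in> borel_measurable ?P" "soe_iter gam lam t \<in> borel_measurable ?P"
      using that by (auto intro!: soe_iter_measurable)
    note [measurable] = this
    show ?thesis unfolding dsq_def by measurable
  qed
  have A_meas: "A \<in> borel_measurable ?P" unfolding A_def using dsq_meas by auto
  have A_nn: "A \<xi> \<ge> 0" for \<xi> unfolding A_def dsq_def using nonneg by (auto intro!: sum_nonneg)
  note A_int_le = Q.integral_le_of_pathwise_bound[OF A_meas A_nn S_int S_zero N_int pathwise]
  note A_int = A_int_le(1) and A_le = A_int_le(2)
  have "(\<Sum>t = 1..k. ennreal (\<theta> t / 8) * (\<integral>\<^sup>+ \<xi>. ennreal (dsq t \<xi>) \<partial>?P))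
          = (\<Sum>t = 1..k. (\<integral>\<^sup>+ \<xi>. ennreal (\<theta> t / 8 * dsq t \<xi>) \<partial>?P))"
  proof (intro sum.cong refl)
    fix t assume t: "t \<in> {1..k}"
    have "(\<integral>\<^sup>+ \<xi>. ennreal (\<theta> t / 8 * dsq t \<xi>) \<partial>?P) = (\<integral>\<^sup>+ \<xi>. ennreal (\<theta> t / 8) * ennreal (dsq t \<xi>) \<partial>?P)"
      using nonneg by (intro nn_integral_cong ennreal_mult) (auto simp: dsq_def)
    also have "\<dots> = ennreal (\<theta> t / 8) * (\<integral>\<^sup>+ \<xi>. ennreal (dsq t \<xi>) \<partial>?P)"
      using dsq_meas t by (intro nn_integral_cmult) auto
    finally show "ennreal (\<theta> t / 8) * (\<integral>\<^sup>+ \<xi>. ennreal (dsq t \<xi>) \<partial>?P)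
                    = (\<integral>\<^sup>+ \<xi>. ennreal (\<theta> t / 8 * dsq t \<xi>) \<partial>?P)" ..
  qed
  also have "\<dots> = (\<integral>\<^sup>+ \<xi>. (\<Sum>t = 1..k. ennreal (\<theta> t / 8 * dsq t \<xi>)) \<partial>?P)"
    by (rule nn_integral_sum[symmetric]) (use dsq_meas in auto)
  also have "\<dots> = (\<integral>\<^sup>+ \<xi>. ennreal (A \<xi>) \<partial>?P)"
    unfolding A_def by (intro nn_integral_cong sum_ennreal) (auto simp: nonneg dsq_def)
  also have "\<dots> = ennreal (\<integral>\<xi>. A \<xi> \<partial>?P)"
    by (rule nn_integral_eq_integral[OF A_int]) (use A_nn in auto)
  also have "\<dots> \<le> ennreal (C + ((\<Sum>t = 1..k. 8 * \<theta> t * (gam t)\<^sup>2 * (lam t)\<^sup>2 * (\<sigma>\<^sup>2 / real m))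
                   + 4 * \<theta> k * (gam k)\<^sup>2 * (\<sigma>\<^sup>2 / real m)))"
    using A_le N_le by (intro ennreal_leI) linarith
  finally show ?thesis unfolding dsq_def C_def by (simp add: add.assoc)
qed

section \<open>Constant step sizes and the residual\<close>

abbreviation const_iter :: "nat \<Rightarrow> (nat \<times> nat \<Rightarrow> 's) \<Rightarrow> 'a" where
  "const_iter \<equiv> soe_iter (\<lambda>_. 1 / (4 * L)) (\<lambda>_. 1)"

lemma
  fixes k :: nat
  assumes mk: "m = k + 1"
  shows const_step_sq_integrable: "t \<in> {1..k} \<Longrightarrow> integrable (PiM ({1..Suc k} \<times> {..<m}) (\<lambda>_. D))
            (\<lambda>\<xi>. (norm (const_iter (t + 1) \<xi> - const_iter t \<xi>))\<^sup>2)"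
    and const_step_sq_sum_le: "(\<Sum>t=1..k. (\<integral>\<xi>. (norm (const_iter (t + 1) \<xi> - const_iter t \<xi>))\<^sup>2
            \<partial>PiM ({1..Suc k} \<times> {..<m}) (\<lambda>_. D))) \<le> 8 * bregman w gw x1 xs + 4 * \<sigma>\<^sup>2 / L\<^sup>2"
proof -
  let ?P = "PiM ({1..Suc k} \<times> {..<m}) (\<lambda>_. D)"
  define dsq where "dsq t \<xi> = (norm (const_iter (t + 1) \<xi> - const_iter t \<xi>))\<^sup>2" for t \<xi>
  define T where "T t = (\<integral>\<^sup>+ \<xi>. ennreal (dsq t \<xi>) \<partial>?P)" for t
  define RB where "RB = bregman w gw x1 xs + (\<Sum>t = 1..k. 8 * (1 / (4 * L))\<^sup>2 * (\<sigma>\<^sup>2 / real m))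
                   + 4 * (1 / (4 * L))\<^sup>2 * (\<sigma>\<^sup>2 / real m)"
  have gsq: "16 * L\<^sup>2 * (1 / (4 * L))\<^sup>2 = 1" using L_pos by (simp add: power2_eq_square field_simps)
  have energy: "(\<Sum>t = 1..k. ennreal (1 / 8) * T t) \<le> ennreal RB"
    using expected_energy_le[of "\<lambda>_. 1 / (4 * L)" "\<lambda>_. 1" "\<lambda>_. 1" k] gsq L_pos
    unfolding T_def dsq_def RB_def by simp
  have "RB = bregman w gw x1 xs + ((8 * real k + 4) / (8 * real m)) * (\<sigma>\<^sup>2 / (2 * L\<^sup>2))"
    unfolding RB_def using L_pos m_pos by (simp add: power2_eq_square field_simps)
  also have "\<dots> \<le> bregman w gw x1 xs + 1 * (\<sigma>\<^sup>2 / (2 * L\<^sup>2))"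
    using mk by (intro add_left_mono mult_right_mono) (auto simp: field_simps)
  finally have RB_le: "RB \<le> bregman w gw x1 xs + \<sigma>\<^sup>2 / (2 * L\<^sup>2)" by simp
  have T_fin: "T t < \<infinity>" if t: "t \<in> {1..k}" for t
  proof -
    have "ennreal (1 / 8) * T t \<le> (\<Sum>t = 1..k. ennreal (1 / 8) * T t)"
      by (rule member_le_sum) (use t in auto)
    also have "\<dots> < \<infinity>" using energy by (simp add: le_less_trans)
    finally show ?thesis by (auto simp: ennreal_mult_less_top)
  qed
  have dsq_int: "integrable ?P (dsq t)" if t: "t \<in> {1..k}" for t
  proof (rule integrableI_nonneg)
    have "const_iter (t + 1) \<in> borel_measurable ?P" "const_iter t \<in> borel_measurable ?P"
      using t by (auto intro!: soe_iter_measurable)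
    note [measurable] = this
    show "dsq t \<in> borel_measurable ?P" unfolding dsq_def by measurable
  qed (use T_fin[OF t] in \<open>auto simp: T_def dsq_def\<close>)
  thus "t \<in> {1..k} \<Longrightarrow> integrable ?P (\<lambda>\<xi>. (norm (const_iter (t + 1) \<xi> - const_iter t \<xi>))\<^sup>2)" for t
    unfolding dsq_def by simp
  have T_eq: "T t = ennreal (\<integral>\<xi>. dsq t \<xi> \<partial>?P)" if t: "t \<in> {1..k}" for t
    unfolding T_def by (rule nn_integral_eq_integral[OF dsq_int[OF t]]) (auto simp: dsq_def)
  have "0 \<le> (\<integral>\<xi>. dsq t \<xi> \<partial>?P)" for t
    by (rule Bochner_Integration.integral_nonneg) (auto simp: dsq_def)
  hence "ennreal (\<Sum>t = 1..k. 1 / 8 * (\<integral>\<xi>. dsq t \<xi> \<partial>?P)) = (\<Sum>t = 1..k. ennreal (1 / 8) * T t)"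
    using T_eq by (simp add: ennreal_mult[symmetric] sum_ennreal)
  hence "ennreal (\<Sum>t = 1..k. 1 / 8 * (\<integral>\<xi>. dsq t \<xi> \<partial>?P)) \<le> ennreal RB"
    using energy by simp
  moreover have "0 \<le> RB"
    unfolding RB_def using bregman_nonneg[OF x1_in xs_in] by (intro add_nonneg_nonneg sum_nonneg) auto
  ultimately have "(\<Sum>t = 1..k. 1 / 8 * (\<integral>\<xi>. dsq t \<xi> \<partial>?P)) \<le> RB"
    by (simp add: ennreal_le_iff)
  thus "(\<Sum>t=1..k. (\<integral>\<xi>. (norm (const_iter (t + 1) \<xi> - const_iter t \<xi>))\<^sup>2 \<partial>?P))
          \<le> 8 * bregman w gw x1 xs + 4 * \<sigma>\<^sup>2 / L\<^sup>2"
    using RB_le unfolding dsq_def by (simp add: sum_divide_distrib[symmetric] field_simps)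
qed

end

lemma residual_le_norm:
  assumes "y \<in> uminus ` normal_cone X z"
  shows "residual X F z \<le> norm (y - F z)"
  unfolding residual_def by (rule cINF_lower[OF _ assms]) (auto intro: bdd_belowI[of _ 0])

lemma residual_nonneg: "residual X F z \<ge> 0"
proof -
  have "0 \<in> uminus ` normal_cone X z" by (force simp: normal_cone_def)
  thus ?thesis unfolding residual_def by (intro cINF_greatest) auto
qed

context bregman_setup
begin

lemma prox_point_residual_le:
  assumes a: "a \<in> X" and prox: "is_prox_point a (\<gamma> *\<^sub>R g) z" and \<gamma>: "\<gamma> > 0"
  shows "residual X F z \<le> norm (g + (1 / \<gamma>) *\<^sub>R (gw z - gw a) - F z)"
proof (rule residual_le_norm)
  have "- (g + (1 / \<gamma>) *\<^sub>R (gw z - gw a)) \<in> normal_cone X z"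
    unfolding normal_cone_def
  proof (intro CollectI ballI)
    fix u assume u: "u \<in> X"
    have "0 \<le> inner (\<gamma> *\<^sub>R g + gw z - gw a) (u - z)"
      by (rule prox_point_variational_ineq[OF a prox u])
    also have "\<dots> = \<gamma> * inner (g + (1 / \<gamma>) *\<^sub>R (gw z - gw a)) (u - z)"
      using \<gamma> by (simp add: inner_simps algebra_simps)
    finally have "0 \<le> inner (g + (1 / \<gamma>) *\<^sub>R (gw z - gw a)) (u - z)"
      using \<gamma> by (simp add: zero_le_mult_iff)
    thus "inner (- (g + (1 / \<gamma>) *\<^sub>R (gw z - gw a))) (u - z) \<le> 0"
      unfolding inner_minus_left by linarith
  qed
  thus "g + (1 / \<gamma>) *\<^sub>R (gw z - gw a) \<in> uminus ` normal_cone X z"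
    by (metis image_eqI minus_minus)
qed

end

context soe
begin

definition residual_majorant :: "nat \<Rightarrow> (nat \<times> nat \<Rightarrow> 's) \<Rightarrow> real" where
  "residual_majorant t \<xi> =
     4 * (L + 4 * L * Lw)\<^sup>2 * (norm (const_iter (Suc t) \<xi> - const_iter t \<xi>))\<^sup>2
     + 4 * L\<^sup>2 * (norm (const_iter t \<xi> - const_iter (t - 1) \<xi>))\<^sup>2
     + 16 * iter_noise_sq (\<lambda>_. 1 / (4 * L)) (\<lambda>_. 1) t \<xi>
     + 4 * iter_noise_sq (\<lambda>_. 1 / (4 * L)) (\<lambda>_. 1) (t - 1) \<xi>"

lemma residual_sq_le_majorant:
  assumes t: "t \<ge> 2"
  shows "(residual X F (const_iter (Suc t) \<xi>))\<^sup>2 \<le> residual_majorant t \<xi>"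
proof -
  define a z ap where "a = const_iter t \<xi>" and "z = const_iter (Suc t) \<xi>"
    and "ap = const_iter (t - 1) \<xi>"
  define Ft Fp where "Ft = minibatch m a t \<xi>" and "Fp = minibatch m ap (t - 1) \<xi>"
  have a: "a \<in> X" and z: "z \<in> X" and ap: "ap \<in> X" unfolding a_def z_def ap_def by (auto intro: soe_iter_in)
  have "is_prox_point a ((1 / (4 * L)) *\<^sub>R (2 *\<^sub>R Ft - Fp)) z"
    using soe_iter_is_prox_point[of t "\<lambda>_. 1 / (4 * L)" "\<lambda>_. 1" \<xi>] t
    unfolding a_def z_def ap_def Ft_def Fp_def by (simp add: algebra_simps scaleR_2)
  hence "residual X F z \<le> norm (2 *\<^sub>R Ft - Fp + (4 * L) *\<^sub>R (gw z - gw a) - F z)"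
    using prox_point_residual_le[OF a] L_pos by fastforce
  also have "2 *\<^sub>R Ft - Fp + (4 * L) *\<^sub>R (gw z - gw a) - F z
      = (F a - F z) + (F a - F ap) + (4 * L) *\<^sub>R (gw z - gw a) + (2 *\<^sub>R (Ft - F a) - (Fp - F ap))"
    by (simp add: algebra_simps scaleR_2)
  also have "norm \<dots> \<le> (L + 4 * L * Lw) * norm (z - a) + L * norm (a - ap)
                         + (2 * norm (Ft - F a) + norm (Fp - F ap))"
  proof -
    have "norm ((F a - F z) + (F a - F ap) + (4 * L) *\<^sub>R (gw z - gw a) + (2 *\<^sub>R (Ft - F a) - (Fp - F ap)))
        \<le> norm (F a - F z) + norm (F a - F ap) + norm ((4 * L) *\<^sub>R (gw z - gw a))
           + norm (2 *\<^sub>R (Ft - F a) - (Fp - F ap))"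
      by (meson norm_triangle_le order_refl add_mono norm_triangle_ineq)
    moreover have "norm (F a - F z) \<le> L * norm (z - a)"
      using F_lipD[OF a z] by (simp add: norm_minus_commute)
    moreover have "norm ((4 * L) *\<^sub>R (gw z - gw a)) \<le> 4 * L * (Lw * norm (z - a))"
      using gw_lipD[OF z a] L_pos by simp
    moreover have "norm (2 *\<^sub>R (Ft - F a) - (Fp - F ap)) \<le> 2 * norm (Ft - F a) + norm (Fp - F ap)"
      using norm_triangle_ineq4[of "2 *\<^sub>R (Ft - F a)" "Fp - F ap"] by simp
    ultimately show ?thesis
      using F_lipD[OF a ap] by (simp add: algebra_simps)
  qed
  finally have "(residual X F z)\<^sup>2 \<le> ((L + 4 * L * Lw) * norm (z - a) + L * norm (a - ap)
                         + (2 * norm (Ft - F a) + norm (Fp - F ap)))\<^sup>2"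
    using residual_nonneg by (intro power_mono) auto
  also have "\<dots> \<le> 4 * ((L + 4 * L * Lw) * norm (z - a))\<^sup>2 + 4 * (L * norm (a - ap))\<^sup>2
                   + 2 * (8 * (norm (Ft - F a))\<^sup>2 + 2 * (norm (Fp - F ap))\<^sup>2)"
    using add_sq_le[of "(L + 4 * L * Lw) * norm (z - a)" "L * norm (a - ap)"]
      add_sq_le[of "(L + 4 * L * Lw) * norm (z - a) + L * norm (a - ap)"
                   "2 * norm (Ft - F a) + norm (Fp - F ap)"]
      add_sq_le[of "2 * norm (Ft - F a)" "norm (Fp - F ap)"]
    by (simp add: power_mult_distrib)
  finally show ?thesis
    unfolding residual_majorant_def a_def z_def ap_def Ft_def Fp_def
    by (simp add: power_mult_distrib)
qed

lemma
  assumes mk: "m = k + 1" and t: "t \<in> {2..k}"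
  shows residual_majorant_integrable:
      "integrable (PiM ({1..Suc k} \<times> {..<m}) (\<lambda>_. D)) (residual_majorant t)"
    and residual_majorant_integral_eq: "(\<integral>\<xi>. residual_majorant t \<xi> \<partial>PiM ({1..Suc k} \<times> {..<m}) (\<lambda>_. D))
      = 4 * (L + 4 * L * Lw)\<^sup>2
          * (\<integral>\<xi>. (norm (const_iter (Suc t) \<xi> - const_iter t \<xi>))\<^sup>2 \<partial>PiM ({1..Suc k} \<times> {..<m}) (\<lambda>_. D))
        + 4 * L\<^sup>2
          * (\<integral>\<xi>. (norm (const_iter t \<xi> - const_iter (t - 1) \<xi>))\<^sup>2 \<partial>PiM ({1..Suc k} \<times> {..<m}) (\<lambda>_. D))
        + 16 * (\<integral>\<xi>. iter_noise_sq (\<lambda>_. 1 / (4 * L)) (\<lambda>_. 1) t \<xi> \<partial>PiM ({1..Suc k} \<times> {..<m}) (\<lambda>_. D))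
        + 4 * (\<integral>\<xi>. iter_noise_sq (\<lambda>_. 1 / (4 * L)) (\<lambda>_. 1) (t - 1) \<xi> \<partial>PiM ({1..Suc k} \<times> {..<m}) (\<lambda>_. D))"
proof -
  let ?P = "PiM ({1..Suc k} \<times> {..<m}) (\<lambda>_. D)"
  have t': "t \<in> {1..k}" "t - 1 \<in> {1..k}" and tt: "t - 1 + 1 = t" using t by auto
  have i1: "integrable ?P (\<lambda>\<xi>. (norm (const_iter (Suc t) \<xi> - const_iter t \<xi>))\<^sup>2)"
    using const_step_sq_integrable[OF mk t'(1)] by simp
  have i2: "integrable ?P (\<lambda>\<xi>. (norm (const_iter t \<xi> - const_iter (t - 1) \<xi>))\<^sup>2)"
    using const_step_sq_integrable[OF mk t'(2)] tt by simp
  have i3: "integrable ?P (iter_noise_sq (\<lambda>_. 1 / (4 * L)) (\<lambda>_. 1) t)"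
    "integrable ?P (iter_noise_sq (\<lambda>_. 1 / (4 * L)) (\<lambda>_. 1) (t - 1))"
    using t by (intro soe_iter_noise_sq_integrable; auto)+
  show "integrable ?P (residual_majorant t)"
    unfolding residual_majorant_def
    by (intro Bochner_Integration.integrable_add Bochner_Integration.integrable_mult_right i1 i2 i3)
  show "(\<integral>\<xi>. residual_majorant t \<xi> \<partial>?P)
      = 4 * (L + 4 * L * Lw)\<^sup>2 * (\<integral>\<xi>. (norm (const_iter (Suc t) \<xi> - const_iter t \<xi>))\<^sup>2 \<partial>?P)
        + 4 * L\<^sup>2 * (\<integral>\<xi>. (norm (const_iter t \<xi> - const_iter (t - 1) \<xi>))\<^sup>2 \<partial>?P)
        + 16 * (\<integral>\<xi>. iter_noise_sq (\<lambda>_. 1 / (4 * L)) (\<lambda>_. 1) t \<xi> \<partial>?P)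
        + 4 * (\<integral>\<xi>. iter_noise_sq (\<lambda>_. 1 / (4 * L)) (\<lambda>_. 1) (t - 1) \<xi> \<partial>?P)"
    unfolding residual_majorant_def using i1 i2 i3
    by (simp add: Bochner_Integration.integral_add Bochner_Integration.integrable_add)
qed

lemma sum_residual_majorant_le:
  assumes mk: "m = k + 1" and k: "k \<ge> 2"
  shows "(\<Sum>j=2..k. (\<integral>\<xi>. residual_majorant j \<xi> \<partial>PiM ({1..Suc k} \<times> {..<m}) (\<lambda>_. D)))
    \<le> 4 * ((L + 4 * L * Lw)\<^sup>2 + L\<^sup>2) * (8 * bregman w gw x1 xs + 4 * \<sigma>\<^sup>2 / L\<^sup>2)
       + 20 * (real k - 1) * (\<sigma>\<^sup>2 / real m)"
proof -
  let ?P = "PiM ({1..Suc k} \<times> {..<m}) (\<lambda>_. D)"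
  define c where "c = (L + 4 * L * Lw)\<^sup>2"
  define Dt where "Dt t = (\<integral>\<xi>. (norm (const_iter (Suc t) \<xi> - const_iter t \<xi>))\<^sup>2 \<partial>?P)" for t
  define Et where "Et t = (\<integral>\<xi>. iter_noise_sq (\<lambda>_. 1 / (4 * L)) (\<lambda>_. 1) t \<xi> \<partial>?P)" for t
  have Dt_nn: "0 \<le> Dt t" for t unfolding Dt_def by (simp add: Bochner_Integration.integral_nonneg)
  have Et_le: "Et t \<le> \<sigma>\<^sup>2 / real m" if "t \<in> {1..Suc k}" for t
    unfolding Et_def using that by (intro soe_iter_noise_sq_integral_le) auto
  have SD: "(\<Sum>t=1..k. Dt t) \<le> 8 * bregman w gw x1 xs + 4 * \<sigma>\<^sup>2 / L\<^sup>2"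
    using const_step_sq_sum_le[OF mk] unfolding Dt_def by simp
  have c: "0 \<le> c" unfolding c_def by simp
  have "(\<Sum>j=2..k. Dt j) \<le> (\<Sum>t=1..k. Dt t)"
    by (rule sum_mono2) (use Dt_nn in auto)
  hence D2: "4 * c * (\<Sum>j=2..k. Dt j) \<le> 4 * c * (\<Sum>t=1..k. Dt t)"
    using c by (intro mult_left_mono) auto
  have "(\<Sum>j=2..k. Dt (j - 1)) = (\<Sum>t=1..k - 1. Dt t)"
    using k by (intro sum.reindex_bij_witness[of _ "\<lambda>t. t + 1" "\<lambda>j. j - 1"]) auto
  also have "\<dots> \<le> (\<Sum>t=1..k. Dt t)" by (rule sum_mono2) (use Dt_nn in auto)
  finally have D1: "4 * L\<^sup>2 * (\<Sum>j=2..k. Dt (j - 1)) \<le> 4 * L\<^sup>2 * (\<Sum>t=1..k. Dt t)"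
    by (intro mult_left_mono) auto
  have "(\<Sum>j=2..k. Et j) \<le> (\<Sum>j=2..k. \<sigma>\<^sup>2 / real m)"
    "(\<Sum>j=2..k. Et (j - 1)) \<le> (\<Sum>j=2..k. \<sigma>\<^sup>2 / real m)"
    by (intro sum_mono Et_le; auto)+
  moreover have "(\<Sum>j=2..k. \<sigma>\<^sup>2 / real m) = (real k - 1) * (\<sigma>\<^sup>2 / real m)"
    using k by (simp add: of_nat_diff)
  moreover have "(\<Sum>j=2..k. (\<integral>\<xi>. residual_majorant j \<xi> \<partial>?P))
      = 4 * c * (\<Sum>j=2..k. Dt j) + 4 * L\<^sup>2 * (\<Sum>j=2..k. Dt (j - 1))
        + 16 * (\<Sum>j=2..k. Et j) + 4 * (\<Sum>j=2..k. Et (j - 1))"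
    using residual_majorant_integral_eq[OF mk] k
    unfolding Dt_def Et_def c_def by (simp add: sum.distrib sum_distrib_left)
  ultimately have "(\<Sum>j=2..k. (\<integral>\<xi>. residual_majorant j \<xi> \<partial>?P))
      \<le> 4 * c * (\<Sum>t=1..k. Dt t) + 4 * L\<^sup>2 * (\<Sum>t=1..k. Dt t) + 20 * (real k - 1) * (\<sigma>\<^sup>2 / real m)"
    using D1 D2 by linarith
  also have "\<dots> = 4 * (c + L\<^sup>2) * (\<Sum>t=1..k. Dt t) + 20 * (real k - 1) * (\<sigma>\<^sup>2 / real m)"
    by (simp add: algebra_simps)
  also have "\<dots> \<le> 4 * (c + L\<^sup>2) * (8 * bregman w gw x1 xs + 4 * \<sigma>\<^sup>2 / L\<^sup>2)
                   + 20 * (real k - 1) * (\<sigma>\<^sup>2 / real m)"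
    using SD c by (intro add_right_mono mult_left_mono) auto
  finally show ?thesis unfolding c_def .
qed

end

section \<open>The random output index\<close>

lemma (in prob_space) distr_density_indep_event:
  assumes ind: "indep_rv M (count_space UNIV) R PP Y" and dY: "distr M PP Y = PP"
  shows "distr (density M (indicator {\<omega> \<in> space M. R \<omega> = j})) PP Y
           = scale_measure (ennreal (prob {\<omega> \<in> space M. R \<omega> = j})) PP"
proof -
  define A where "A = {\<omega> \<in> space M. R \<omega> = j}"
  have Rm: "R \<in> measurable M (count_space UNIV)" and Ym: "Y \<in> measurable M PP"
    and isd: "indep_set (sigma_sets (space M) {R -` B \<inter> space M | B. B \<in> sets (count_space UNIV)})
       (sigma_sets (space M) {Y -` B \<inter> space M | B. B \<in> sets PP})"
    using ind unfolding indep_rv_def by auto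
  have A_eq: "A = R -` {j} \<inter> space M" unfolding A_def by auto
  have As: "A \<in> sets M" unfolding A_eq using Rm by (auto intro: measurable_sets)
  have Ag: "A \<in> sigma_sets (space M) {R -` B \<inter> space M | B. B \<in> sets (count_space UNIV)}"
    unfolding A_eq by (intro sigma_sets.Basic) auto
  interpret PP: prob_space PP using prob_space_distr[OF Ym] by (simp add: dY)
  show ?thesis
    unfolding A_def[symmetric]
  proof (rule measure_eqI)
    fix B assume "B \<in> sets (distr (density M (indicator A)) PP Y)"
    hence B: "B \<in> sets PP" by simp
    have YB: "Y -` B \<inter> space M \<in> sets M" using Ym B by (rule measurable_sets)
    have YBg: "Y -` B \<inter> space M \<in> sigma_sets (space M) {Y -` B \<inter> space M | B. B \<in> sets PP}"
      using B by (intro sigma_sets.Basic) auto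
    have "prob (Y -` B \<inter> space M) = measure PP B"
      using emeasure_distr[OF Ym B] dY unfolding measure_def by simp
    moreover have "emeasure (distr (density M (indicator A)) PP Y) B
        = (\<integral>\<^sup>+ x. indicator A x * indicator (Y -` B \<inter> space M) x \<partial>M)"
      using Ym B As YB by (simp add: emeasure_distr emeasure_density)
    moreover have "\<dots> = (\<integral>\<^sup>+ x. indicator (A \<inter> (Y -` B \<inter> space M)) x \<partial>M)"
      by (intro nn_integral_cong) (auto split: split_indicator)
    moreover have "\<dots> = emeasure M (A \<inter> (Y -` B \<inter> space M))" using As YB by simp
    moreover have "prob (A \<inter> (Y -` B \<inter> space M)) = prob A * prob (Y -` B \<inter> space M)"
      by (rule indep_setD[OF isd Ag YBg])
    ultimately show "emeasure (distr (density M (indicator A)) PP Y) B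
        = emeasure (scale_measure (ennreal (prob A)) PP) B"
      using As YB B by (simp add: emeasure_eq_measure PP.emeasure_eq_measure ennreal_mult)
  qed simp
qed

lemma (in prob_space) nn_integral_indicator_indep:
  assumes ind: "indep_rv M (count_space UNIV) R PP Y"
    and dY: "distr M PP Y = PP" and f: "f \<in> borel_measurable PP"
  shows "(\<integral>\<^sup>+ \<omega>. indicator {\<omega> \<in> space M. R \<omega> = j} \<omega> * f (Y \<omega>) \<partial>M)
         = ennreal (prob {\<omega> \<in> space M. R \<omega> = j}) * integral\<^sup>N PP f"
proof -
  define A where "A = {\<omega> \<in> space M. R \<omega> = j}"
  have Ym: "Y \<in> measurable M PP" and Rm: "R \<in> measurable M (count_space UNIV)"
    using ind unfolding indep_rv_def by auto
  have "A = R -` {j} \<inter> space M" unfolding A_def by auto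
  hence "A \<in> sets M" using Rm by (auto intro: measurable_sets)
  hence "indicator A \<in> borel_measurable M" by simp
  hence "(\<integral>\<^sup>+ \<omega>. indicator A \<omega> * f (Y \<omega>) \<partial>M) = integral\<^sup>N (density M (indicator A)) (\<lambda>\<omega>. f (Y \<omega>))"
    using f Ym by (subst nn_integral_density) auto
  also have "\<dots> = integral\<^sup>N (distr (density M (indicator A)) PP Y) f"
    using Ym f by (subst nn_integral_distr) auto
  also have "\<dots> = ennreal (prob A) * integral\<^sup>N PP f"
    unfolding A_def distr_density_indep_event[OF ind dY] using f by (rule nn_integral_scale_measure)
  finally show ?thesis unfolding A_def .
qed

lemma (in prob_space) AE_mem_of_sum_prob_eq_1:
  assumes S: "finite S" and R: "R \<in> measurable M (count_space UNIV)"
    and sum1: "(\<Sum>j\<in>S. prob {\<omega> \<in> space M. R \<omega> = j}) = 1"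
  shows "AE \<omega> in M. R \<omega> \<in> S"
proof -
  have ev: "{\<omega> \<in> space M. R \<omega> = j} \<in> events" for j
    using measurable_sets[OF R, of "{j}"] by (simp add: vimage_def Int_def conj_commute)
  have "prob (\<Union>j\<in>S. {\<omega> \<in> space M. R \<omega> = j}) = (\<Sum>j\<in>S. prob {\<omega> \<in> space M. R \<omega> = j})"
    using S ev by (intro finite_measure_finite_Union) (auto simp: disjoint_family_on_def)
  hence "AE \<omega> in M. \<omega> \<in> (\<Union>j\<in>S. {\<omega> \<in> space M. R \<omega> = j})"
    using sum1 by (intro AE_prob_1) simp
  thus ?thesis by eventually_elim auto
qed

locale soe_samples = soe X w gw F G D \<sigma> L Lw m x1 xs
  for X :: "'a::euclidean_space set" and w gw F and G :: "'a \<Rightarrow> 's \<Rightarrow> 'a" and D \<sigma> L Lw m x1 xs +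
  fixes M :: "'w measure" and xi :: "nat \<Rightarrow> nat \<Rightarrow> 'w \<Rightarrow> 's" and k :: nat
  assumes M_prob: "prob_space M"
    and xi_indep: "prob_space.indep_vars M (\<lambda>_. D) (\<lambda>(t, i). xi t i) ({1..Suc k} \<times> {..<m})"
    and xi_distr: "\<forall>t\<in>{1..Suc k}. \<forall>i<m. distr M D (xi t i) = D"
begin

definition sample_array :: "'w \<Rightarrow> nat \<times> nat \<Rightarrow> 's" where
  "sample_array \<omega> = (\<lambda>p\<in>{1..Suc k} \<times> {..<m}. xi (fst p) (snd p) \<omega>)"

lemma batch_est_eq_minibatch:
  "t \<in> {1..Suc k} \<Longrightarrow> batch_est G xi m x t \<omega> = minibatch m (x t \<omega>) t (sample_array \<omega>)"
  unfolding batch_est_def minibatch_def sample_array_def by (auto intro!: sum.cong)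

lemma soe_iterates_eq_soe_iter:
  assumes iter: "soe_iterates X w gw G xi m gam lam x1 k x" and t: "t \<in> {1..Suc k}"
  shows "x t \<omega> = soe_iter gam lam t (sample_array \<omega>)"
  using t
proof (induction t rule: less_induct)
  case (less t)
  have "t = 1 \<or> (\<exists>s. t = Suc (Suc s))" using less.prems by presburger
  then consider "t = 1" | s where "t = Suc (Suc s)" by blast
  then show ?case
  proof cases
    case 1 thus ?thesis using iter unfolding soe_iterates_def by auto
  next
    case (2 s)
    let ?\<xi> = "sample_array \<omega>" and ?a = "x (Suc s) \<omega>"
    have s: "Suc s \<in> {1..k}" using less.prems 2 by auto
    have IH: "x r \<omega> = soe_iter gam lam r ?\<xi>" if "r \<in> {1..Suc s}" for r
      using less.IH[of r] that 2 s by auto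
    have est: "batch_est G xi m x r \<omega> = iter_est gam lam r ?\<xi>" if "r \<in> {1..Suc s}" for r
      using batch_est_eq_minibatch[of r x \<omega>] IH[OF that] that s by auto
    define g where "g = iter_est gam lam (Suc s) ?\<xi> + lam (Suc s) *\<^sub>R (iter_est gam lam (Suc s) ?\<xi>
                        - (if s = 0 then iter_est gam lam (Suc s) ?\<xi> else iter_est gam lam s ?\<xi>))"
    define Ft Fp where "Ft = batch_est G xi m x (Suc s) \<omega>"
      and "Fp = batch_est G xi m x (if Suc s = 1 then 1 else Suc s - 1) \<omega>"
    have "Ft + lam (Suc s) *\<^sub>R (Ft - Fp) = g"
      unfolding Ft_def Fp_def g_def using est by (cases "s = 0") auto
    moreover have "x (Suc (Suc s)) \<omega> \<in> X \<and> (\<forall>z\<in>X.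
        gam (Suc s) * inner (Ft + lam (Suc s) *\<^sub>R (Ft - Fp)) (x (Suc (Suc s)) \<omega>)
          + bregman w gw ?a (x (Suc (Suc s)) \<omega>)
        \<le> gam (Suc s) * inner (Ft + lam (Suc s) *\<^sub>R (Ft - Fp)) z + bregman w gw ?a z)"
      using iter s unfolding soe_iterates_def Ft_def Fp_def Let_def by blast
    ultimately have "x (Suc (Suc s)) \<omega> \<in> X \<and> (\<forall>z\<in>X. gam (Suc s) * inner g (x (Suc (Suc s)) \<omega>)
            + bregman w gw ?a (x (Suc (Suc s)) \<omega>) \<le> gam (Suc s) * inner g z + bregman w gw ?a z)"
      by simp
    hence "is_prox_point ?a (gam (Suc s) *\<^sub>R g) (x (Suc (Suc s)) \<omega>)"
      unfolding is_prox_point_def by simp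
    moreover have "?a \<in> X" using IH[of "Suc s"] soe_iter_in by simp
    ultimately have "prox_ext ?a (gam (Suc s) *\<^sub>R g) = x (Suc (Suc s)) \<omega>"
      by (simp add: prox_ext_eq prox_eqI)
    thus ?thesis using 2 IH[of "Suc s"] unfolding g_def by (simp add: Let_def)
  qed
qed

lemma sample_array_measurable:
  "sample_array \<in> measurable M (PiM ({1..Suc k} \<times> {..<m}) (\<lambda>_. D))"
proof -
  interpret M: prob_space M by (rule M_prob)
  have "(\<lambda>(t, i). xi t i) p \<in> measurable M D" if "p \<in> {1..Suc k} \<times> {..<m}" for p
    using xi_indep that unfolding M.indep_vars_def by auto
  thus ?thesis unfolding sample_array_def by (intro measurable_restrict) (auto simp: split_beta)
qed

lemma distr_sample_array:
  "distr M (PiM ({1..Suc k} \<times> {..<m}) (\<lambda>_. D)) sample_array = PiM ({1..Suc k} \<times> {..<m}) (\<lambda>_. D)"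
proof -
  interpret M: prob_space M by (rule M_prob)
  let ?I = "{1..Suc k} \<times> {..<m}"
  have rv: "(\<lambda>(t, i). xi t i) p \<in> measurable M D" if "p \<in> ?I" for p
    using xi_indep that unfolding M.indep_vars_def by auto
  have eq: "sample_array = (\<lambda>\<omega>. \<lambda>p\<in>?I. (\<lambda>(t, i). xi t i) p \<omega>)"
    unfolding sample_array_def by (auto simp: fun_eq_iff split_beta)
  have "distr M (PiM ?I (\<lambda>_. D)) sample_array = PiM ?I (\<lambda>p. distr M D ((\<lambda>(t, i). xi t i) p))"
    unfolding eq
    using M.indep_vars_iff_distr_eq_PiM'[of ?I "\<lambda>(t, i). xi t i" "\<lambda>_. D"] rv xi_indep m_pos
    by fastforce
  also have "\<dots> = PiM ?I (\<lambda>_. D)"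
    by (intro PiM_cong refl) (use xi_distr in \<open>auto simp: split_beta\<close>)
  finally show ?thesis .
qed

lemma nn_integral_sample_array:
  assumes "f \<in> borel_measurable (PiM ({1..Suc k} \<times> {..<m}) (\<lambda>_. D))"
  shows "(\<integral>\<^sup>+\<omega>. f (sample_array \<omega>) \<partial>M) = integral\<^sup>N (PiM ({1..Suc k} \<times> {..<m}) (\<lambda>_. D)) f"
proof -
  have "integral\<^sup>N (PiM ({1..Suc k} \<times> {..<m}) (\<lambda>_. D)) f
          = integral\<^sup>N (distr M (PiM ({1..Suc k} \<times> {..<m}) (\<lambda>_. D)) sample_array) f"
    by (simp only: distr_sample_array)
  also have "\<dots> = (\<integral>\<^sup>+\<omega>. f (sample_array \<omega>) \<partial>M)"
    by (rule nn_integral_distr[OF sample_array_measurable]) (use assms in simp)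
  finally show ?thesis by simp
qed

lemma expected_sq_steps_bound:
  fixes gam lam \<theta> :: "nat \<Rightarrow> real" and x :: "nat \<Rightarrow> 'w \<Rightarrow> 'a"
  assumes nonneg: "\<forall>t. gam t \<ge> 0 \<and> lam t \<ge> 0 \<and> \<theta> t \<ge> 0"
    and iter: "soe_iterates X w gw G xi m gam lam x1 k x"
    and cond: "\<forall>t\<in>{1..k}. \<theta> (t + 1) * gam (t + 1) * lam (t + 1) = gam t * \<theta> t \<and>
                 \<theta> (t - 1) \<ge> 16 * L\<^sup>2 * (gam t)\<^sup>2 * (lam t)\<^sup>2 * \<theta> t \<and> \<theta> t \<le> \<theta> (t - 1)"
    and last: "8 * L\<^sup>2 * (gam k)\<^sup>2 \<le> 1"
  shows "(\<Sum>t = 1..k. ennreal (\<theta> t / 8) * (\<integral>\<^sup>+ \<omega>. ennreal ((norm (x (t + 1) \<omega> - x t \<omega>))\<^sup>2) \<partial>M))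
        \<le> ennreal (\<theta> 1 * bregman w gw x1 xs
                   + (\<Sum>t = 1..k. 8 * \<theta> t * (gam t)\<^sup>2 * (lam t)\<^sup>2 * (\<sigma>\<^sup>2 / real m))
                   + 4 * \<theta> k * (gam k)\<^sup>2 * (\<sigma>\<^sup>2 / real m))"
proof -
  let ?P = "PiM ({1..Suc k} \<times> {..<m}) (\<lambda>_. D)"
  have "(\<integral>\<^sup>+ \<omega>. ennreal ((norm (x (t + 1) \<omega> - x t \<omega>))\<^sup>2) \<partial>M)
      = (\<integral>\<^sup>+ \<xi>. ennreal ((norm (soe_iter gam lam (t + 1) \<xi> - soe_iter gam lam t \<xi>))\<^sup>2) \<partial>?P)"
    if t: "t \<in> {1..k}" for t
  proof -
    have [measurable]: "soe_iter gam lam (t + 1) \<in> borel_measurable ?P" "soe_iter gam lam t \<in> borel_measurable ?P"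
      using t by (auto intro!: soe_iter_measurable)
    have "(\<integral>\<^sup>+ \<omega>. ennreal ((norm (x (t + 1) \<omega> - x t \<omega>))\<^sup>2) \<partial>M) = (\<integral>\<^sup>+ \<omega>.
        ennreal ((norm (soe_iter gam lam (t + 1) (sample_array \<omega>) - soe_iter gam lam t (sample_array \<omega>)))\<^sup>2) \<partial>M)"
      using soe_iterates_eq_soe_iter[OF iter] t by simp
    also have "\<dots> = (\<integral>\<^sup>+ \<xi>. ennreal ((norm (soe_iter gam lam (t + 1) \<xi> - soe_iter gam lam t \<xi>))\<^sup>2) \<partial>?P)"
      by (rule nn_integral_sample_array) measurable
    finally show ?thesis .
  qed
  thus ?thesis using expected_energy_le[OF nonneg cond last] by simp
qed

lemma mean_residual_majorant_le:
  assumes mk: "m = k + 1" and k: "k \<ge> 2"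
  shows "1 / (real k - 1) * (\<Sum>j=2..k. (\<integral>\<xi>. residual_majorant j \<xi> \<partial>PiM ({1..Suc k} \<times> {..<m}) (\<lambda>_. D)))
    \<le> 20 * \<sigma>\<^sup>2 / (real k + 1)
       + 32 * ((L + 4 * L * Lw)\<^sup>2 + L\<^sup>2) * (2 * bregman w gw x1 xs + \<sigma>\<^sup>2 / L\<^sup>2) / (real k - 1)"
proof -
  define Z where "Z = ((L + 4 * L * Lw)\<^sup>2 + L\<^sup>2) * (2 * bregman w gw x1 xs + \<sigma>\<^sup>2 / L\<^sup>2)"
  have k1: "real k - 1 > 0" using k by simp
  have "1 / (real k - 1) * (\<Sum>j=2..k. (\<integral>\<xi>. residual_majorant j \<xi> \<partial>PiM ({1..Suc k} \<times> {..<m}) (\<lambda>_. D)))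
      \<le> 1 / (real k - 1) * (4 * ((L + 4 * L * Lw)\<^sup>2 + L\<^sup>2) * (8 * bregman w gw x1 xs + 4 * \<sigma>\<^sup>2 / L\<^sup>2)
          + 20 * (real k - 1) * (\<sigma>\<^sup>2 / real m))"
    using sum_residual_majorant_le[OF mk k] k1 by (intro mult_left_mono) auto
  also have "\<dots> = 16 * Z / (real k - 1) + 20 * \<sigma>\<^sup>2 / (real k + 1)"
    unfolding Z_def using k1 L_pos mk by (simp add: field_simps)
  also have "\<dots> \<le> 32 * Z / (real k - 1) + 20 * \<sigma>\<^sup>2 / (real k + 1)"
    using bregman_nonneg[OF x1_in xs_in] k1 unfolding Z_def by (intro add_right_mono divide_right_mono) auto
  finally show ?thesis by (simp only: Z_def mult.assoc add.commute)
qed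

lemma expected_residual_bound:
  fixes x :: "nat \<Rightarrow> 'w \<Rightarrow> 'a" and R :: "'w \<Rightarrow> nat"
  assumes k: "k \<ge> 2" and mk: "m = k + 1"
    and iter: "soe_iterates X w gw G xi m (\<lambda>_. 1 / (4 * L)) (\<lambda>_. 1) x1 k x"
    and ind: "indep_rv M (count_space UNIV) R (PiM ({1..Suc k} \<times> {..<m}) (\<lambda>_. D)) sample_array"
    and R_distr: "\<forall>j. measure M {\<omega> \<in> space M. R \<omega> = j} = (if j \<in> {2..k} then 1 / (real k - 1) else 0)"
  shows "(\<integral>\<^sup>+ \<omega>. ennreal ((residual X F (x (R \<omega> + 1) \<omega>))\<^sup>2) \<partial>M)
    \<le> ennreal (20 * \<sigma>\<^sup>2 / (real k + 1)
       + 32 * ((L + 4 * L * Lw)\<^sup>2 + L\<^sup>2) * (2 * bregman w gw x1 xs + \<sigma>\<^sup>2 / L\<^sup>2) / (real k - 1))"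
proof -
  interpret M: prob_space M by (rule M_prob)
  let ?P = "PiM ({1..Suc k} \<times> {..<m}) (\<lambda>_. D)"
  define A where "A j = {\<omega> \<in> space M. R \<omega> = j}" for j
  have Rm: "R \<in> measurable M (count_space UNIV)" using ind unfolding indep_rv_def by blast
  have "AE \<omega> in M. R \<omega> \<in> {2..k}"
    using R_distr k by (intro M.AE_mem_of_sum_prob_eq_1[OF _ Rm]) (auto simp: of_nat_diff)
  hence "(\<integral>\<^sup>+ \<omega>. ennreal ((residual X F (x (R \<omega> + 1) \<omega>))\<^sup>2) \<partial>M)
      \<le> (\<integral>\<^sup>+ \<omega>. (\<Sum>j\<in>{2..k}. indicator (A j) \<omega> * ennreal (residual_majorant j (sample_array \<omega>))) \<partial>M)"
  proof (intro nn_integral_mono_AE, elim AE_mp, intro AE_I2 impI)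
    fix \<omega> assume \<omega>: "\<omega> \<in> space M" and R\<omega>: "R \<omega> \<in> {2..k}"
    have "(\<Sum>j\<in>{2..k}. indicator (A j) \<omega> * ennreal (residual_majorant j (sample_array \<omega>)))
        = ennreal (residual_majorant (R \<omega>) (sample_array \<omega>))"
      using \<omega> R\<omega> by (simp add: A_def indicator_def if_distrib sum.delta' cong: if_cong)
    moreover have "x (R \<omega> + 1) \<omega> = const_iter (Suc (R \<omega>)) (sample_array \<omega>)"
      using soe_iterates_eq_soe_iter[OF iter] R\<omega> by simp
    ultimately show "ennreal ((residual X F (x (R \<omega> + 1) \<omega>))\<^sup>2)
        \<le> (\<Sum>j\<in>{2..k}. indicator (A j) \<omega> * ennreal (residual_majorant j (sample_array \<omega>)))"
      using residual_sq_le_majorant[of "R \<omega>"] R\<omega> by (simp add: ennreal_leI)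
  qed
  also have "\<dots> = (\<Sum>j\<in>{2..k}. ennreal (1 / (real k - 1)) * ennreal (\<integral>\<xi>. residual_majorant j \<xi> \<partial>?P))"
  proof -
    have int: "integrable ?P (residual_majorant j)" if "j \<in> {2..k}" for j
      using residual_majorant_integrable[OF mk that] .
    have nn: "residual_majorant j \<xi> \<ge> 0" for j \<xi> unfolding residual_majorant_def by simp
    have [measurable]: "indicator (A j) \<in> borel_measurable M" for j
      using measurable_sets[OF Rm, of "{j}"] by (simp add: A_def vimage_def Int_def conj_commute)
    have "(\<lambda>\<omega>. indicator (A j) \<omega> * ennreal (residual_majorant j (sample_array \<omega>))) \<in> borel_measurable M"
      if "j \<in> {2..k}" for j
    proof -
      note [measurable] =
        measurable_compose[OF sample_array_measurable borel_measurable_integrable[OF int[OF that]]]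
      show ?thesis by measurable
    qed
    hence "(\<integral>\<^sup>+ \<omega>. (\<Sum>j\<in>{2..k}. indicator (A j) \<omega> * ennreal (residual_majorant j (sample_array \<omega>))) \<partial>M)
        = (\<Sum>j\<in>{2..k}. (\<integral>\<^sup>+ \<omega>. indicator (A j) \<omega> * ennreal (residual_majorant j (sample_array \<omega>)) \<partial>M))"
      by (intro nn_integral_sum) auto
    also have "\<dots> = (\<Sum>j\<in>{2..k}. ennreal (measure M (A j)) * (\<integral>\<^sup>+ \<xi>. ennreal (residual_majorant j \<xi>) \<partial>?P))"
      unfolding A_def using int
      by (intro sum.cong refl M.nn_integral_indicator_indep[OF ind distr_sample_array]) auto
    finally show ?thesis
      using R_distr int nn by (simp add: A_def nn_integral_eq_integral)
  qed
  also have "\<dots> = ennreal (1 / (real k - 1) * (\<Sum>j\<in>{2..k}. (\<integral>\<xi>. residual_majorant j \<xi> \<partial>?P)))"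
    using k by (simp add: ennreal_mult[symmetric] sum_ennreal sum_distrib_left
        Bochner_Integration.integral_nonneg residual_majorant_def)
  also have "\<dots> \<le> ennreal (20 * \<sigma>\<^sup>2 / (real k + 1)
       + 32 * ((L + 4 * L * Lw)\<^sup>2 + L\<^sup>2) * (2 * bregman w gw x1 xs + \<sigma>\<^sup>2 / L\<^sup>2) / (real k - 1))"
    using mean_residual_majorant_le[OF mk k] by (rule ennreal_leI)
  finally show ?thesis .
qed

end

theorem theorem3p2:
  fixes X :: "'a::euclidean_space set" and F :: "'a \<Rightarrow> 'a" and L Lw \<sigma> :: real
    and w :: "'a \<Rightarrow> real" and gw :: "'a \<Rightarrow> 'a"
    and G :: "'a \<Rightarrow> 's \<Rightarrow> 'a" and D :: "'s measure"
    and M :: "'w measure" and xi :: "nat \<Rightarrow> nat \<Rightarrow> 'w \<Rightarrow> 's"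
    and m k :: nat and x1 xs :: 'a
  assumes X_ne: "X \<noteq> {}" and X_closed: "closed X" and X_convex: "convex X"
    and F_lip: "L-lipschitz_on X F" and L_pos: "L > 0"
    and w_deriv: "\<forall>z\<in>X. (w has_derivative (\<lambda>h. inner (gw z) h)) (at z within X)"
    and w_sconvex: "strongly_convex_on X 1 w"
    and gw_lip: "Lw-lipschitz_on X gw"
    and D_prob: "prob_space D"
    and G_meas: "(\<lambda>(z, s). G z s) \<in> borel_measurable (borel \<Otimes>\<^sub>M D)"
    and G_oracle: "\<forall>z\<in>X. integrable D (G z) \<and> (\<integral>s. G z s \<partial>D) = F z \<and>
                     (\<integral>\<^sup>+ s. ennreal ((norm (G z s - F z))\<^sup>2) \<partial>D) \<le> ennreal (\<sigma>\<^sup>2)"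
    and M_prob: "prob_space M"
    and m_pos: "m > 0"
    and xi_indep: "prob_space.indep_vars M (\<lambda>_. D) (\<lambda>(t, i). xi t i) ({1..Suc k} \<times> {..<m})"
    and xi_distr: "\<forall>t\<in>{1..Suc k}. \<forall>i<m. distr M D (xi t i) = D"
    and x1_in: "x1 \<in> X"
    and xs_in: "xs \<in> X"
    and xs_sol: "\<forall>z\<in>X. inner (F xs) (z - xs) \<ge> 0 \<and> inner (F z) (z - xs) \<ge> 0"
  shows
    "(\<forall>gam lam \<theta> x.
        (\<forall>t. gam t \<ge> 0 \<and> lam t \<ge> 0 \<and> \<theta> t \<ge> 0) \<and>
        soe_iterates X w gw G xi m gam lam x1 k x \<and>
        (\<forall>t\<in>{1..k}. \<theta> (t + 1) * gam (t + 1) * lam (t + 1) = gam t * \<theta> t \<and>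
                     \<theta> (t - 1) \<ge> 16 * L\<^sup>2 * (gam t)\<^sup>2 * (lam t)\<^sup>2 * \<theta> t \<and>
                     \<theta> t \<le> \<theta> (t - 1)) \<and>
        8 * L\<^sup>2 * (gam k)\<^sup>2 \<le> 1
      \<longrightarrow>
        (\<Sum>t = 1..k. ennreal (\<theta> t / 8) *
            (\<integral>\<^sup>+ \<omega>. ennreal ((norm (x (t + 1) \<omega> - x t \<omega>))\<^sup>2) \<partial>M))
        \<le> ennreal (\<theta> 1 * bregman w gw x1 xs
                   + (\<Sum>t = 1..k. 8 * \<theta> t * (gam t)\<^sup>2 * (lam t)\<^sup>2 * (\<sigma>\<^sup>2 / real m))
                   + 4 * \<theta> k * (gam k)\<^sup>2 * (\<sigma>\<^sup>2 / real m)))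
     \<and>
     (k \<ge> 2 \<and> m = k + 1 \<longrightarrow>
       (\<forall>x (R :: 'w \<Rightarrow> nat).
          soe_iterates X w gw G xi m (\<lambda>_. 1 / (4 * L)) (\<lambda>_. 1) x1 k x \<and>
          indep_rv M (count_space UNIV) R
             (Pi\<^sub>M ({1..Suc k} \<times> {..<m}) (\<lambda>_. D))
             (\<lambda>\<omega>. \<lambda>p\<in>{1..Suc k} \<times> {..<m}. xi (fst p) (snd p) \<omega>) \<and>
          (\<forall>j. measure M {\<omega> \<in> space M. R \<omega> = j} =
                 (if j \<in> {2..k} then 1 / (real k - 1) else 0))
        \<longrightarrow>
          (\<integral>\<^sup>+ \<omega>. ennreal ((residual X F (x (R \<omega> + 1) \<omega>))\<^sup>2) \<partial>M)
          \<le> ennreal (20 * \<sigma>\<^sup>2 / (real k + 1)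
                     + 32 * ((L + 4 * L * Lw)\<^sup>2 + L\<^sup>2)
                         * (2 * bregman w gw x1 xs + \<sigma>\<^sup>2 / L\<^sup>2) / (real k - 1))))"
proof -
  interpret soe_samples X w gw F G D \<sigma> L Lw m x1 xs M xi k
    by (intro soe_samples.intro soe.intro bregman_setup.intro stochastic_oracle.intro soe_axioms.intro
          soe_samples_axioms.intro) (use assms in auto)
  show ?thesis
    using expected_sq_steps_bound expected_residual_bound[unfolded sample_array_def] by blast
qed

end
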